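(* In the setting described in the context, for every $\mathbf w\in\Gamma$ with $\mathbf w\ne\mathbf 1$, \[ \int_{\mathcal N_{\mathbf w}}\frac{(1+z_1)\cdots(1+z_{d-1})}{B(\hat{\mathbf z})\,z_1\cdots z_d}\cdot\frac{B(\hat{\mathbf z})-z_d^2A(\hat{\mathbf z})}{1-z_d}\cdot\bar S(\mathbf z)^n\,d\mathbf z=o\big(S(\mathbf 1)^n n^{-d/2}\big)\quad (n\to\infty). \]
   Context: Setting: $d\ge1$; $\mathcal{S}\subset\{-1,0,1\}^d\setminus\{\mathbf 0\}$ with positive weights $w_{\mathbf{i}}$, characteristic polynomial $S(\mathbf{z})=\sum_{\mathbf{i}\in\mathcal{S}}w_{\mathbf{i}}\mathbf{z}^{\mathbf{i}}=z_d^{-1}A(\hat{\mathbf{z}})+Q(\hat{\mathbf{z}})+z_dB(\hat{\mathbf{z}})$ with $\hat{\mathbf z}=(z_1,\dots,z_{d-1})$, where $\mathcal{S}$ is symmetric (including weights) over each of the first $d-1$ axes (so $A,Q,B$ are invariant under $z_j\mapsto1/z_j$, $j\le d-1$), $\mathcal{S}$ has a step with $j$th coordinate $+1$ and one with $-1$ for every $j$, and $A(\mathbf 1)=B(\mathbf 1)$ (zero drift). Let $\bar S(\mathbf z)=S(z_1,\dots,z_{d-1},1/z_d)=z_dA(\hat{\mathbf z})+Q(\hat{\mathbf z})+z_d^{-1}B(\hat{\mathbf z})$. Let $\Gamma$ be the set of $\mathbf w=(\hat{\mathbf w},w_d)$ with $\hat{\mathbf w}\in\{\pm1\}^{d-1}$,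 $w_d\in\{\pm1,\pm i\}$ and $|S(\hat{\mathbf w},w_d)|=S(\mathbf 1)$. Set $\epsilon=n^{-\alpha}$, $\delta=n^{-\beta}$ with constants satisfying $1/2<\alpha<2\beta$, $\alpha+\beta>1$, $1/3<\beta<1/2$. For $\mathbf w\in\Gamma$ let $\mathcal N_{\mathbf w}=\{\mathbf z\in\mathbb C^d: |z_j|=1\ (1\le j\le d-1),\ |z_d|=1-\epsilon,\ |\arg z_j-\arg w_j|<\delta\ \text{for all } j\}$, with counterclockwise orientation of each arc. *)

theory Defs
  imports "HOL-Analysis.Analysis" "HOL-Library.Landau_Symbols"
begin

text \<open>Points of C^d and steps in Z^d are functions on nat; coordinates are indexed 1..d,
  the last coordinate being d.\<close>

definition valid_stepset :: "nat \<Rightarrow> (nat \<Rightarrow> int) set \<Rightarrow> bool" where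
  "valid_stepset d S \<longleftrightarrow> finite S \<and>
     (\<forall>i\<in>S. (\<forall>j\<in>{1..d}. i j \<in> {-1, 0, 1}) \<and> (\<forall>j. j \<notin> {1..d} \<longrightarrow> i j = 0)
            \<and> (\<exists>j\<in>{1..d}. i j \<noteq> 0))"

definition charpoly :: "nat \<Rightarrow> (nat \<Rightarrow> int) set \<Rightarrow> ((nat \<Rightarrow> int) \<Rightarrow> real) \<Rightarrow> (nat \<Rightarrow> complex) \<Rightarrow> complex" where
  "charpoly d S wt z = (\<Sum>i\<in>S. of_real (wt i) * (\<Prod>j\<in>{1..d}. z j powi i j))"

text \<open>A, Q, B: S(z) = z_d^{-1} A(zhat) + Q(zhat) + z_d B(zhat).\<close>
definition polyA :: "nat \<Rightarrow> (nat \<Rightarrow> int) set \<Rightarrow> ((nat \<Rightarrow> int) \<Rightarrow> real) \<Rightarrow> (nat \<Rightarrow> complex) \<Rightarrow> complex" where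
  "polyA d S wt z = (\<Sum>i\<in>{i\<in>S. i d = -1}. of_real (wt i) * (\<Prod>j\<in>{1..<d}. z j powi i j))"

definition polyQ :: "nat \<Rightarrow> (nat \<Rightarrow> int) set \<Rightarrow> ((nat \<Rightarrow> int) \<Rightarrow> real) \<Rightarrow> (nat \<Rightarrow> complex) \<Rightarrow> complex" where
  "polyQ d S wt z = (\<Sum>i\<in>{i\<in>S. i d = 0}. of_real (wt i) * (\<Prod>j\<in>{1..<d}. z j powi i j))"

definition polyB :: "nat \<Rightarrow> (nat \<Rightarrow> int) set \<Rightarrow> ((nat \<Rightarrow> int) \<Rightarrow> real) \<Rightarrow> (nat \<Rightarrow> complex) \<Rightarrow> complex" where
  "polyB d S wt z = (\<Sum>i\<in>{i\<in>S. i d = 1}. of_real (wt i) * (\<Prod>j\<in>{1..<d}. z j powi i j))"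

definition charpoly_bar :: "nat \<Rightarrow> (nat \<Rightarrow> int) set \<Rightarrow> ((nat \<Rightarrow> int) \<Rightarrow> real) \<Rightarrow> (nat \<Rightarrow> complex) \<Rightarrow> complex" where
  "charpoly_bar d S wt z = charpoly d S wt (z(d := 1 / z d))"

definition reflect :: "nat \<Rightarrow> (nat \<Rightarrow> int) \<Rightarrow> (nat \<Rightarrow> int)" where
  "reflect j i = i(j := - i j)"

definition symmetric_first :: "nat \<Rightarrow> (nat \<Rightarrow> int) set \<Rightarrow> ((nat \<Rightarrow> int) \<Rightarrow> real) \<Rightarrow> bool" where
  "symmetric_first d S wt \<longleftrightarrow> (\<forall>j\<in>{1..<d}. \<forall>i\<in>S. reflect j i \<in> S \<and> wt (reflect j i) = wt i)"

definition all_directions :: "nat \<Rightarrow> (nat \<Rightarrow> int) set \<Rightarrow> bool" where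
  "all_directions d S \<longleftrightarrow> (\<forall>j\<in>{1..d}. (\<exists>i\<in>S. i j = 1) \<and> (\<exists>i\<in>S. i j = -1))"

definition Gamma :: "nat \<Rightarrow> (nat \<Rightarrow> int) set \<Rightarrow> ((nat \<Rightarrow> int) \<Rightarrow> real) \<Rightarrow> (nat \<Rightarrow> complex) set" where
  "Gamma d S wt = {v. (\<forall>j\<in>{1..<d}. v j \<in> {1, -1}) \<and> v d \<in> {1, -1, \<i>, -\<i>} \<and>
      complex_of_real (cmod (charpoly d S wt v)) = charpoly d S wt (\<lambda>_. 1)}"

definition zpt :: "nat \<Rightarrow> real \<Rightarrow> (nat \<Rightarrow> real) \<Rightarrow> (nat \<Rightarrow> complex)" where
  "zpt d eps \<theta> = (\<lambda>j. if j = d then of_real (1 - eps) * cis (\<theta> j) else cis (\<theta> j))"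

definition Nbox :: "nat \<Rightarrow> real \<Rightarrow> (nat \<Rightarrow> complex) \<Rightarrow> (nat \<Rightarrow> real) set" where
  "Nbox d delta v = {\<theta>. \<forall>j\<in>{1..d}. \<bar>\<theta> j - Arg (v j)\<bar> < delta}"

definition integrand :: "nat \<Rightarrow> (nat \<Rightarrow> int) set \<Rightarrow> ((nat \<Rightarrow> int) \<Rightarrow> real) \<Rightarrow> nat \<Rightarrow> (nat \<Rightarrow> complex) \<Rightarrow> complex" where
  "integrand d S wt n z =
     (\<Prod>j\<in>{1..<d}. 1 + z j) / (polyB d S wt z * (\<Prod>j\<in>{1..d}. z j))
     * ((polyB d S wt z - (z d)^2 * polyA d S wt z) / (1 - z d))
     * charpoly_bar d S wt z ^ n"

text \<open>The integral over N_v, each arc oriented counterclockwise: dz_j = i z_j dtheta_j.\<close>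
definition Nintegral :: "nat \<Rightarrow> (nat \<Rightarrow> int) set \<Rightarrow> ((nat \<Rightarrow> int) \<Rightarrow> real) \<Rightarrow> real \<Rightarrow> real \<Rightarrow> (nat \<Rightarrow> complex) \<Rightarrow> nat \<Rightarrow> complex" where
  "Nintegral d S wt \<alpha> \<beta> v n =
     (let eps = real n powr (-\<alpha>); delta = real n powr (-\<beta>) in
      set_lebesgue_integral (PiM {1..d} (\<lambda>_. lborel)) (Nbox d delta v)
        (\<lambda>\<theta>. integrand d S wt n (zpt d eps \<theta>) * (\<Prod>j\<in>{1..d}. \<i> * zpt d eps \<theta> j)))"

end

(*
  Parametrise N_w by z = (e^(i theta_1), ..., e^(i theta_(d-1)), (1 - eps) e^(i theta_d)) with
  theta = arg w + t and |t_j| < delta.  Since |S(w)| = S(1), all steps have the same phase at w, so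
  |Sbar(z)|^2 = M^2 - D(t), where M = S(1) + O(eps^2) thanks to the zero drift and D is a positive
  combination of 1 - cos of phase differences of steps.  Symmetry in the first d - 1 axes and steps in
  every direction make D >= c |t|^2, hence |Sbar(z)|^n <= S(1)^n e^(2 n eps^2) e^(-c n |t|^2), and
  e^(2 n eps^2) stays bounded because alpha > 1/2.  The rest of the integrand is O(delta + eps + delta^2/eps):
  if w_j = -1 for some j < d, then 1 + z_j = O(delta) while (B - z_d^2 A)/(1 - z_d) = O(delta/eps + 1);
  otherwise w = (1, ..., 1, -1) and 1 + z_d = O(delta + eps).  Integrating the Gaussian yields
  n^(-d/2), and delta + eps + delta^2/eps -> 0 because alpha < 2 beta.
*)

theory Submission
  imports Defs "HOL-Probability.Distributions"
begin

lemma prod_cis: "finite A \<Longrightarrow> (\<Prod>x\<in>A. cis (f x)) = cis (\<Sum>x\<in>A. f x)"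
  by (induction A rule: finite_induct) (auto simp: cis_mult)

lemma norm_cis_diff_le: "norm (cis x - cis y) \<le> \<bar>x - y\<bar>"
proof -
  have "2 * ((x - y) / 2) = x - y" by simp
  then have cd: "cos (x - y) = 1 - 2 * (sin ((x - y) / 2))\<^sup>2"
    using cos_double_sin[of "(x - y) / 2"] by metis
  have "(norm (cis x - cis y))\<^sup>2 = (cos x - cos y)\<^sup>2 + (sin x - sin y)\<^sup>2"
    by (simp add: cmod_power2)
  also have "\<dots> = ((sin x)\<^sup>2 + (cos x)\<^sup>2) + ((sin y)\<^sup>2 + (cos y)\<^sup>2) - 2 * (cos x * cos y + sin x * sin y)"
    by (simp add: power2_eq_square algebra_simps)
  also have "\<dots> = 2 - 2 * cos (x - y)" by (simp add: cos_diff)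
  also have "\<dots> = (2 * \<bar>sin ((x - y) / 2)\<bar>)\<^sup>2" unfolding cd by (simp add: power2_eq_square)
  finally have "norm (cis x - cis y) = 2 * \<bar>sin ((x - y) / 2)\<bar>"
    by (subst (asm) power2_eq_iff_nonneg) auto
  also have "\<dots> \<le> 2 * \<bar>(x - y) / 2\<bar>"
    using abs_sin_x_le_abs_x[of "(x - y) / 2"] by linarith
  finally show ?thesis by simp
qed

lemma sin_ge_five_sixths:
  fixes y :: real
  assumes "0 \<le> y" "y \<le> 1"
  shows "5/6 * y \<le> sin y"
proof -
  have "\<bar>sin y - (\<Sum>m<3. sin_coeff m * y ^ m)\<bar> \<le> inverse (fact 3) * \<bar>y\<bar> ^ 3"
    by (rule Maclaurin_sin_bound)
  moreover have "(\<Sum>m<3. sin_coeff m * y ^ m) = y"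
    by (simp add: numeral_3_eq_3 numeral_2_eq_2 sin_coeff_def)
  moreover have "(fact 3 :: real) = 6"
    by (simp add: numeral_3_eq_3 fact_Suc)
  then have "inverse (fact 3) * \<bar>y\<bar> ^ 3 = y ^ 3 / 6"
    using assms by simp
  moreover have "y * (y * y) \<le> y * 1"
    using assms by (intro mult_left_mono) (auto simp: mult_le_one)
  then have "y ^ 3 \<le> y" by (simp add: power3_eq_cube)
  ultimately show ?thesis by linarith
qed

lemma one_minus_cos_ge_square:
  fixes x :: real
  assumes "\<bar>x\<bar> \<le> 2"
  shows "x\<^sup>2 / 4 \<le> 1 - cos x"
proof -
  have "1 - cos x = 2 * (sin (\<bar>x\<bar> / 2))\<^sup>2"
    using cos_double_sin[of "\<bar>x\<bar> / 2"] by (cases "x < 0") auto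
  moreover have "5/6 * (\<bar>x\<bar> / 2) \<le> sin (\<bar>x\<bar> / 2)"
    using assms by (intro sin_ge_five_sixths) auto
  then have "(5/6 * (\<bar>x\<bar> / 2))\<^sup>2 \<le> (sin (\<bar>x\<bar> / 2))\<^sup>2"
    by (intro power_mono) auto
  moreover have "x\<^sup>2 / 4 \<le> 2 * (5/6 * (\<bar>x\<bar> / 2))\<^sup>2"
    by (simp add: power2_eq_square)
  ultimately show ?thesis by linarith
qed

lemma le_diff_div_of_square_le:
  fixes x M D :: real
  assumes "0 \<le> x" "x\<^sup>2 \<le> M\<^sup>2 - D" "0 \<le> D" "0 < M"
  shows "x \<le> M - D / (2 * M)"
proof -
  have "D \<le> M\<^sup>2" using assms(2) zero_le_power2[of x] by linarith
  then have "D / (2 * M) \<le> M / 2" using assms by (simp add: field_simps power2_eq_square)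
  then have nonneg: "0 \<le> M - D / (2 * M)" using assms by linarith
  have "(M - D / (2 * M))\<^sup>2 = M\<^sup>2 - D + (D / (2 * M))\<^sup>2"
    using assms by (simp add: power2_eq_square field_simps)
  then have "x\<^sup>2 \<le> (M - D / (2 * M))\<^sup>2"
    using assms(2) zero_le_power2[of "D / (2 * M)"] by linarith
  then show ?thesis using nonneg assms power2_le_imp_le by blast
qed

lemma power_le_exp_of_le:
  fixes x W t :: real
  assumes "0 \<le> x" "x \<le> W * (1 + t)" "0 < W"
  shows "x ^ n \<le> W ^ n * exp (real n * t)"
proof -
  have "x \<le> W * exp t"
    using assms exp_ge_add_one_self[of t] by (smt (verit) mult_left_mono)
  then have "x ^ n \<le> (W * exp t) ^ n" using assms(1) by (rule power_mono)
  then show ?thesis by (simp add: power_mult_distrib exp_of_nat_mult)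
qed

lemma eq_of_Re_cnj_mult_eq_one:
  fixes s u :: complex
  assumes "norm s = 1" "norm u = 1" "Re (cnj s * u) = 1"
  shows "u = s"
proof -
  have "(Re (cnj s * u))\<^sup>2 + (Im (cnj s * u))\<^sup>2 = 1"
    using cmod_power2[of "cnj s * u"] assms by (simp add: norm_mult)
  then have "cnj s * u = 1" using assms(3) by (simp add: complex_eq_iff)
  then have "s * (cnj s * u) = s" by simp
  moreover have "s * cnj s = 1" using assms(1) complex_norm_square[of s] by simp
  ultimately show ?thesis by (simp add: mult.assoc[symmetric])
qed

lemma unit_vectors_eq_of_norm_sum_eq:
  fixes u :: "'a \<Rightarrow> complex"
  assumes fin: "finite S" and pos: "\<And>i. i \<in> S \<Longrightarrow> w i > 0" and unit: "\<And>i. i \<in> S \<Longrightarrow> norm (u i) = 1"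
    and eq: "norm (\<Sum>i\<in>S. of_real (w i) * u i) = (\<Sum>i\<in>S. w i)"
  shows "\<exists>s. norm s = 1 \<and> (\<forall>i\<in>S. u i = s)"
proof (cases "S = {}")
  case True then show ?thesis by (intro exI[of _ 1]) auto
next
  case False
  define X where "X = (\<Sum>i\<in>S. of_real (w i) * u i)"
  have "(\<Sum>i\<in>S. w i) > 0" using False fin pos by (intro sum_pos) auto
  then have "X \<noteq> 0" using eq X_def by auto
  define s where "s = sgn X"
  have s_unit: "norm s = 1" using \<open>X \<noteq> 0\<close> by (simp add: s_def norm_sgn)
  have "cnj s = cnj X / of_real (norm X)"
    by (simp add: s_def sgn_div_norm scaleR_conv_of_real divide_inverse)
  then have "cnj s * X = (X * cnj X) / of_real (norm X)"
    by (simp add: mult.commute)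
  also have "\<dots> = of_real (norm X)"
    using \<open>X \<noteq> 0\<close> by (simp flip: complex_norm_square add: power2_eq_square)
  finally have "Re (cnj s * X) = norm X" by simp
  moreover have "Re (cnj s * X) = (\<Sum>i\<in>S. w i * Re (cnj s * u i))"
    by (simp add: X_def sum_distrib_left algebra_simps)
  ultimately have "(\<Sum>i\<in>S. w i * Re (cnj s * u i)) = (\<Sum>i\<in>S. w i)"
    using eq X_def by simp
  then have sum_zero: "(\<Sum>i\<in>S. w i * (1 - Re (cnj s * u i))) = 0"
    by (simp add: algebra_simps sum_subtractf)
  have Re_le: "Re (cnj s * u i) \<le> 1" if "i \<in> S" for i
    using complex_Re_le_cmod[of "cnj s * u i"] s_unit unit[OF that] by (simp add: norm_mult)
  have nonneg: "\<forall>i\<in>S. 0 \<le> w i * (1 - Re (cnj s * u i))"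
  proof
    fix i assume "i \<in> S"
    then show "0 \<le> w i * (1 - Re (cnj s * u i))"
      using pos[of i] Re_le[of i] by (intro mult_nonneg_nonneg) auto
  qed
  have "\<forall>i\<in>S. w i * (1 - Re (cnj s * u i)) = 0"
    using sum_nonneg_eq_0_iff[OF fin, of "\<lambda>i. w i * (1 - Re (cnj s * u i))"] sum_zero nonneg by simp
  then have Re_eq: "Re (cnj s * u i) = 1" if "i \<in> S" for i
    using that pos[OF that] by auto
  then show ?thesis using s_unit unit eq_of_Re_cnj_mult_eq_one by blast
qed

lemma norm_sum_cis_squared:
  fixes a \<psi> :: "'a \<Rightarrow> real"
  shows "(norm (\<Sum>i\<in>S. of_real (a i) * cis (\<psi> i)))\<^sup>2
       = (\<Sum>i\<in>S. a i)\<^sup>2 - (\<Sum>i\<in>S. \<Sum>k\<in>S. a i * a k * (1 - cos (\<psi> i - \<psi> k)))"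
proof -
  define X where "X = (\<Sum>i\<in>S. of_real (a i) * cis (\<psi> i))"
  have "complex_of_real ((norm X)\<^sup>2) = X * cnj X" by (rule complex_norm_square)
  also have "\<dots> = (\<Sum>i\<in>S. of_real (a i) * cis (\<psi> i)) * (\<Sum>k\<in>S. of_real (a k) * cis (- \<psi> k))"
    by (simp add: X_def cis_cnj)
  also have "\<dots> = (\<Sum>i\<in>S. \<Sum>k\<in>S. (of_real (a i) * cis (\<psi> i)) * (of_real (a k) * cis (- \<psi> k)))"
    by (rule sum_product)
  also have "\<dots> = (\<Sum>i\<in>S. \<Sum>k\<in>S. of_real (a i * a k) * cis (\<psi> i - \<psi> k))"
  proof (intro sum.cong refl)
    fix i k
    have "cis (\<psi> i - \<psi> k) = cis (\<psi> i) * cis (- \<psi> k)" by (simp add: cis_mult)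
    then show "(of_real (a i) * cis (\<psi> i)) * (of_real (a k) * cis (- \<psi> k)) = of_real (a i * a k) * cis (\<psi> i - \<psi> k)"
      by (simp add: mult_ac)
  qed
  finally have "Re (complex_of_real ((norm X)\<^sup>2)) = Re (\<Sum>i\<in>S. \<Sum>k\<in>S. of_real (a i * a k) * cis (\<psi> i - \<psi> k))"
    by (rule arg_cong)
  then have "(norm X)\<^sup>2 = (\<Sum>i\<in>S. \<Sum>k\<in>S. a i * a k * cos (\<psi> i - \<psi> k))"
    by (simp add: Re_sum)
  moreover have "(\<Sum>i\<in>S. a i)\<^sup>2 = (\<Sum>i\<in>S. \<Sum>k\<in>S. a i * a k)"
    by (simp add: power2_eq_square sum_product)
  ultimately show ?thesis
    by (simp add: X_def algebra_simps sum_subtractf)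
qed

section \<open>Gaussian integrals\<close>

lemma nn_integral_gaussian:
  fixes k a :: real
  assumes k: "k > 0"
  shows "(\<integral>\<^sup>+x. ennreal (exp (- (k * (x - a)\<^sup>2))) \<partial>lborel) = ennreal (sqrt (pi / k))"
proof -
  define \<sigma> where "\<sigma> = sqrt (1 / (2 * k))"
  have s2: "\<sigma>\<^sup>2 = 1 / (2 * k)" using k by (simp add: \<sigma>_def)
  have sp: "\<sigma> > 0" using k by (simp add: \<sigma>_def)
  have eq: "exp (- (k * (x - a)\<^sup>2)) = sqrt (pi / k) * normal_density a \<sigma> x" for x
  proof -
    have "2 * pi * \<sigma>\<^sup>2 = pi / k" using k by (simp add: s2)
    moreover have "- (x - a)\<^sup>2 / (2 * \<sigma>\<^sup>2) = - (k * (x - a)\<^sup>2)" using k by (simp add: s2)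
    moreover have "sqrt (pi / k) > 0" using k by simp
    ultimately show ?thesis using k by (simp add: normal_density_def)
  qed
  have "(\<integral>\<^sup>+x. ennreal (exp (- (k * (x - a)\<^sup>2))) \<partial>lborel)
       = (\<integral>\<^sup>+x. ennreal (sqrt (pi / k)) * ennreal (normal_density a \<sigma> x) \<partial>lborel)"
    using k by (intro nn_integral_cong) (simp add: eq ennreal_mult')
  also have "\<dots> = ennreal (sqrt (pi / k)) * (\<integral>\<^sup>+x. ennreal (normal_density a \<sigma> x) \<partial>lborel)"
    by (rule nn_integral_cmult) simp
  also have "(\<integral>\<^sup>+x. ennreal (normal_density a \<sigma> x) \<partial>lborel) = ennreal (integral\<^sup>L lborel (normal_density a \<sigma>))"
    by (rule nn_integral_eq_integral) (use sp in auto)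
  also have "integral\<^sup>L lborel (normal_density a \<sigma>) = 1" using sp by simp
  finally show ?thesis by simp
qed

lemma ennreal_norm_integral_le:
  fixes g :: "'a \<Rightarrow> 'b::{banach, second_countable_topology}"
  shows "ennreal (norm (integral\<^sup>L M g)) \<le> (\<integral>\<^sup>+x. norm (g x) \<partial>M)"
proof (cases "integrable M g")
  case True then show ?thesis by (rule integral_norm_bound_ennreal)
next
  case False then show ?thesis by (simp add: not_integrable_integral_eq)
qed

lemma norm_set_integral_le_gaussian:
  fixes f :: "('i \<Rightarrow> real) \<Rightarrow> 'b::{banach, second_countable_topology}" and a :: "'i \<Rightarrow> real"
  assumes k: "k > 0" and K: "K \<ge> 0"
    and bnd: "\<And>\<theta>. \<theta> \<in> A \<Longrightarrow> norm (f \<theta>) \<le> K * (\<Prod>j\<in>I. exp (- (k * (\<theta> j - a j)\<^sup>2)))"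
    and I: "finite I"
  shows "norm (set_lebesgue_integral (PiM I (\<lambda>_. lborel)) A f) \<le> K * sqrt (pi / k) ^ card I"
proof -
  interpret product_sigma_finite "\<lambda>_::'i. lborel" by standard
  let ?M = "PiM I (\<lambda>_. lborel)"
  let ?g = "\<lambda>\<theta>. indicator A \<theta> *\<^sub>R f \<theta>"
  have "ennreal (norm (set_lebesgue_integral ?M A f)) \<le> (\<integral>\<^sup>+x. norm (?g x) \<partial>?M)"
    unfolding set_lebesgue_integral_def by (rule ennreal_norm_integral_le)
  also have "\<dots> \<le> (\<integral>\<^sup>+x. ennreal K * (\<Prod>j\<in>I. ennreal (exp (- (k * (x j - a j)\<^sup>2)))) \<partial>?M)"
  proof (rule nn_integral_mono)
    fix x
    have "norm (?g x) \<le> K * (\<Prod>j\<in>I. exp (- (k * (x j - a j)\<^sup>2)))"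
    proof (cases "x \<in> A")
      case True then show ?thesis using bnd[OF True] by simp
    next
      case False then show ?thesis using K by (simp add: prod_nonneg)
    qed
    then have "ennreal (norm (?g x)) \<le> ennreal (K * (\<Prod>j\<in>I. exp (- (k * (x j - a j)\<^sup>2))))"
      by (rule ennreal_leI)
    also have "\<dots> = ennreal K * (\<Prod>j\<in>I. ennreal (exp (- (k * (x j - a j)\<^sup>2))))"
      using K by (simp add: ennreal_mult prod_ennreal prod_nonneg)
    finally show "ennreal (norm (?g x)) \<le> ennreal K * (\<Prod>j\<in>I. ennreal (exp (- (k * (x j - a j)\<^sup>2))))" .
  qed
  also have "\<dots> = ennreal K * (\<integral>\<^sup>+x. (\<Prod>j\<in>I. ennreal (exp (- (k * (x j - a j)\<^sup>2)))) \<partial>?M)"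
    by (rule nn_integral_cmult) measurable
  also have "(\<integral>\<^sup>+x. (\<Prod>j\<in>I. ennreal (exp (- (k * (x j - a j)\<^sup>2)))) \<partial>?M)
      = (\<Prod>j\<in>I. \<integral>\<^sup>+y. ennreal (exp (- (k * (y - a j)\<^sup>2))) \<partial>lborel)"
    by (rule product_nn_integral_prod[OF I, where f="\<lambda>j y. ennreal (exp (- (k * (y - a j)\<^sup>2)))"]) measurable
  also have "\<dots> = (\<Prod>j\<in>I. ennreal (sqrt (pi / k)))" by (intro prod.cong refl nn_integral_gaussian k)
  also have "\<dots> = ennreal (sqrt (pi / k) ^ card I)" using ennreal_power[of "sqrt (pi / k)" "card I"] k by simp
  also have "ennreal K * ennreal (sqrt (pi / k) ^ card I) = ennreal (K * sqrt (pi / k) ^ card I)"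
    by (rule ennreal_mult[symmetric]) (use K k in auto)
  finally have "ennreal (norm (set_lebesgue_integral ?M A f)) \<le> ennreal (K * sqrt (pi / k) ^ card I)" .
  then show ?thesis using K k by (subst (asm) ennreal_le_iff) auto
qed

lemma sqrt_divide_power_eq:
  fixes p q :: real
  assumes n: "n > 0" and p: "p \<ge> 0" and q: "q > 0"
  shows "sqrt (p / (real n * q)) ^ d = sqrt (p / q) ^ d * real n powr (- (real d / 2))"
proof -
  have rn: "real n > 0" using n by simp
  have "sqrt (p / (real n * q)) = sqrt (p / q) * sqrt (1 / real n)"
    by (simp add: real_sqrt_mult[symmetric] field_simps)
  moreover have "sqrt (1 / real n) = real n powr (- 1/2)"
    using rn by (simp add: real_sqrt_divide powr_minus_divide powr_half_sqrt)
  moreover have "(real n powr (- 1/2)) ^ d = real n powr (- (real d / 2))"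
  proof -
    have "(real n powr (- 1/2)) ^ d = (real n powr (- 1/2)) powr (real d)"
      using rn by (simp add: powr_realpow)
    also have "\<dots> = real n powr (- (real d / 2))" by (simp add: powr_powr)
    finally show ?thesis .
  qed
  ultimately show ?thesis by (simp add: power_mult_distrib)
qed

lemma real_mult_powr_square_le:
  fixes \<alpha> :: real
  assumes n: "n \<ge> 1" and a: "\<alpha> > 1/2"
  shows "real n * (real n powr (- \<alpha>))\<^sup>2 \<le> 1"
proof -
  have rn: "real n \<ge> 1" using n by simp
  have e: "1 - 2 * \<alpha> = 1 + (- \<alpha> + - \<alpha>)" by simp
  have pe: "real n powr (1 - 2 * \<alpha>) = real n powr 1 * (real n powr (- \<alpha>) * real n powr (- \<alpha>))"
    unfolding e powr_add ..
  have "real n * (real n powr (- \<alpha>))\<^sup>2 = real n powr 1 * (real n powr (- \<alpha>) * real n powr (- \<alpha>))"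
    using rn by (simp add: power2_eq_square powr_one)
  also have "\<dots> = real n powr (1 - 2 * \<alpha>)" by (rule pe[symmetric])
  also have "\<dots> \<le> real n powr 0" by (rule powr_mono) (use a rn in auto)
  finally show ?thesis using rn by simp
qed

definition prefactor_scale :: "real \<Rightarrow> real \<Rightarrow> nat \<Rightarrow> real" where
  "prefactor_scale \<alpha> \<beta> n = real n powr (-\<beta>) + real n powr (-\<alpha>) + (real n powr (-\<beta>))\<^sup>2 / real n powr (-\<alpha>)"

lemma prefactor_scale_nonneg: "0 \<le> prefactor_scale \<alpha> \<beta> n"
  by (simp add: prefactor_scale_def)

lemma prefactor_scale_tendsto_zero:
  assumes a: "\<alpha> > 0" and b: "\<beta> > 0" and ab: "\<alpha> < 2 * \<beta>"
  shows "prefactor_scale \<alpha> \<beta> \<longlonglongrightarrow> 0"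
proof -
  have r: "filterlim (\<lambda>n. real n) at_top sequentially" by (rule filterlim_real_sequentially)
  have "(\<lambda>n. real n powr (-\<beta>) + real n powr (-\<alpha>) + real n powr (\<alpha> - 2 * \<beta>)) \<longlonglongrightarrow> 0 + 0 + 0"
    by (intro tendsto_add tendsto_neg_powr r) (use a b ab in auto)
  moreover have "eventually (\<lambda>n. real n powr (-\<beta>) + real n powr (-\<alpha>) + real n powr (\<alpha> - 2 * \<beta>)
      = prefactor_scale \<alpha> \<beta> n) sequentially"
    using eventually_gt_at_top[of 0]
  proof eventually_elim
    case (elim n)
    have "(real n powr (-\<beta>))\<^sup>2 = real n powr (-\<beta> + -\<beta>)" by (simp only: power2_eq_square powr_add)
    then have "(real n powr (-\<beta>))\<^sup>2 / real n powr (-\<alpha>) = real n powr (-\<beta> + -\<beta>) / real n powr (-\<alpha>)"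
      by simp
    also have "\<dots> = real n powr ((-\<beta> + -\<beta>) - (-\<alpha>))" by (rule powr_diff[symmetric])
    finally show ?case by (simp add: prefactor_scale_def)
  qed
  ultimately show ?thesis by (simp add: tendsto_cong)
qed

lemma smallo_of_eventually_le_vanishing:
  fixes f g X :: "nat \<Rightarrow> real"
  assumes bound: "eventually (\<lambda>n. \<bar>f n\<bar> \<le> C * X n * g n) sequentially"
    and X: "X \<longlonglongrightarrow> 0" and C: "0 < C" and g: "\<And>n. 0 \<le> g n"
  shows "f \<in> o(g)"
proof (rule landau_o.smallI)
  fix c :: real assume c: "c > 0"
  have "eventually (\<lambda>n. X n < c / C) sequentially"
    by (rule order_tendstoD(2)[OF X]) (use c C in simp)
  with bound show "eventually (\<lambda>n. norm (f n) \<le> c * norm (g n)) sequentially"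
  proof eventually_elim
    case (elim n)
    then have "C * X n \<le> c" using C by (simp add: field_simps)
    then have "C * X n * g n \<le> c * g n" using g by (rule mult_right_mono)
    then show ?case using elim(1) g[of n] by simp
  qed
qed

section \<open>Polar coordinates\<close>

definition hat_phase :: "nat \<Rightarrow> (nat \<Rightarrow> int) \<Rightarrow> (nat \<Rightarrow> real) \<Rightarrow> real" where
  "hat_phase d i \<theta> = (\<Sum>j\<in>{1..<d}. of_int (i j) * \<theta> j)"

definition polar_pt :: "nat \<Rightarrow> real \<Rightarrow> (nat \<Rightarrow> real) \<Rightarrow> nat \<Rightarrow> complex" where
  "polar_pt d r \<theta> = (\<lambda>j. if j = d then of_real r * cis (\<theta> j) else cis (\<theta> j))"

lemma prod_polar_pt_hat: "(\<Prod>j\<in>{1..<d}. polar_pt d r \<theta> j powi i j) = cis (hat_phase d i \<theta>)"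
proof -
  have "(\<Prod>j\<in>{1..<d}. polar_pt d r \<theta> j powi i j) = (\<Prod>j\<in>{1..<d}. cis (of_int (i j) * \<theta> j))"
    by (rule prod.cong) (auto simp: polar_pt_def cis_power_int)
  also have "\<dots> = cis (hat_phase d i \<theta>)" by (simp add: prod_cis hat_phase_def)
  finally show ?thesis .
qed

lemma prod_polar_pt:
  assumes "d \<ge> 1" "r \<noteq> 0"
  shows "(\<Prod>j\<in>{1..d}. polar_pt d r \<theta> j powi i j) = of_real (r powi i d) * cis (hat_phase d i \<theta> + of_int (i d) * \<theta> d)"
proof -
  have e: "{1..d} = insert d {1..<d}" using assms by auto
  have "(\<Prod>j\<in>{1..d}. polar_pt d r \<theta> j powi i j) = polar_pt d r \<theta> d powi i d * (\<Prod>j\<in>{1..<d}. polar_pt d r \<theta> j powi i j)"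
    unfolding e by (subst prod.insert) auto
  also have "\<dots> = (of_real r * cis (\<theta> d)) powi i d * cis (hat_phase d i \<theta>)"
    by (simp only: prod_polar_pt_hat) (simp add: polar_pt_def)
  also have "\<dots> = of_real (r powi i d) * cis (hat_phase d i \<theta> + of_int (i d) * \<theta> d)"
    by (simp add: power_int_mult_distrib cis_power_int cis_mult[symmetric] mult_ac)
  finally show ?thesis .
qed

lemma charpoly_polar_pt:
  assumes "d \<ge> 1" "r \<noteq> 0"
  shows "charpoly d S wt (polar_pt d r \<theta>) = (\<Sum>i\<in>S. of_real (wt i * r powi i d) * cis (hat_phase d i \<theta> + of_int (i d) * \<theta> d))"
  unfolding charpoly_def using prod_polar_pt[OF assms] by (simp add: mult_ac)

lemma charpoly_cong:
  assumes "\<And>j. j \<in> {1..d} \<Longrightarrow> z j = z' j"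
  shows "charpoly d S wt z = charpoly d S wt z'"
  unfolding charpoly_def using assms by (auto intro!: sum.cong prod.cong)

lemma zpt_eq_polar_pt: "zpt d eps \<theta> = polar_pt d (1 - eps) \<theta>"
  by (simp add: zpt_def polar_pt_def fun_eq_iff)

lemma charpoly_bar_zpt:
  assumes "d \<ge> 1" "eps < 1"
  shows "charpoly_bar d S wt (zpt d eps \<theta>) =
     (\<Sum>i\<in>S. of_real (wt i * (1 / (1 - eps)) powi i d) * cis (hat_phase d i \<theta> - of_int (i d) * \<theta> d))"
proof -
  have phu: "hat_phase d i (\<theta>(d := - \<theta> d)) = hat_phase d i \<theta>" for i
    unfolding hat_phase_def by (auto intro!: sum.cong)
  have "charpoly_bar d S wt (zpt d eps \<theta>) = charpoly d S wt (polar_pt d (1 / (1 - eps)) (\<theta>(d := - \<theta> d)))"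
    unfolding charpoly_bar_def
    by (rule charpoly_cong) (use assms in \<open>auto simp: zpt_def polar_pt_def cis_inverse divide_inverse\<close>)
  also have "\<dots> = (\<Sum>i\<in>S. of_real (wt i * (1 / (1 - eps)) powi i d) * cis (hat_phase d i (\<theta>(d := - \<theta> d)) + of_int (i d) * (- \<theta> d)))"
    by (subst charpoly_polar_pt) (use assms in auto)
  finally show ?thesis by (simp add: phu)
qed

lemma hat_phase_add: "hat_phase d i (\<lambda>j. a j + b j) = hat_phase d i a + hat_phase d i b"
  by (simp add: hat_phase_def sum.distrib algebra_simps)

lemma abs_hat_phase_le:
  assumes "\<forall>j\<in>{1..<d}. \<bar>i j\<bar> \<le> 1" "\<forall>j\<in>{1..<d}. \<bar>t j\<bar> \<le> c" "0 \<le> c"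
  shows "\<bar>hat_phase d i t\<bar> \<le> real d * c"
proof -
  have "\<bar>hat_phase d i t\<bar> \<le> (\<Sum>j\<in>{1..<d}. \<bar>of_int (i j) * t j\<bar>)" unfolding hat_phase_def by (rule sum_abs)
  also have "\<dots> \<le> (\<Sum>j\<in>{1..<d}. c)"
  proof (intro sum_mono)
    fix j assume j: "j \<in> {1..<d}"
    have "\<bar>of_int (i j) * t j\<bar> = \<bar>of_int (i j)\<bar> * \<bar>t j\<bar>" by (simp add: abs_mult)
    also have "\<dots> \<le> 1 * c" using assms j
      by (intro mult_mono) (auto simp del: of_int_abs simp: of_int_abs[symmetric])
    finally show "\<bar>of_int (i j) * t j\<bar> \<le> c" by simp
  qed
  also have "\<dots> \<le> real d * c" using assms(3) by (simp add: mult_right_mono)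
  finally show ?thesis .
qed

section \<open>A point of \<open>\<Gamma>\<close>\<close>

locale walk =
  fixes d :: nat and S :: "(nat \<Rightarrow> int) set" and wt :: "(nat \<Rightarrow> int) \<Rightarrow> real" and v :: "nat \<Rightarrow> complex"
  assumes d_pos: "d \<ge> 1"
    and valid: "valid_stepset d S"
    and pos: "\<forall>i\<in>S. wt i > 0"
    and sym_steps: "symmetric_first d S wt"
    and dirs: "all_directions d S"
    and drift: "polyA d S wt (\<lambda>_. 1) = polyB d S wt (\<lambda>_. 1)"
    and v_Gamma: "v \<in> Gamma d S wt"
    and v_ne_one: "\<exists>j\<in>{1..d}. v j \<noteq> 1"
begin

definition "\<theta>v = (\<lambda>j. Arg (v j))"
definition "SA = {i\<in>S. i d = -1}"
definition "SQ = {i\<in>S. i d = 0}"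
definition "SB = {i\<in>S. i d = 1}"
definition "W = (\<Sum>i\<in>S. wt i)"
definition "A1 = (\<Sum>i\<in>SA. wt i)"
definition "Q1 = (\<Sum>i\<in>SQ. wt i)"
definition "B1 = (\<Sum>i\<in>SB. wt i)"

lemma finite_S: "finite S" using valid by (simp add: valid_stepset_def)
lemma wt_pos: "i \<in> S \<Longrightarrow> wt i > 0" using pos by auto
lemma step_coord: "i \<in> S \<Longrightarrow> j \<in> {1..d} \<Longrightarrow> i j \<in> {-1, 0, 1}" using valid by (auto simp: valid_stepset_def)
lemma abs_step_coord_le: "i \<in> S \<Longrightarrow> j \<in> {1..d} \<Longrightarrow> \<bar>i j\<bar> \<le> 1" using step_coord by fastforce
lemma d_mem: "d \<in> {1..d}" using d_pos by auto

lemma SA_nonempty: "SA \<noteq> {}" and SB_nonempty: "SB \<noteq> {}"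
  using dirs d_mem unfolding all_directions_def SA_def SB_def by blast+

lemma finite_SA: "finite SA" and finite_SQ: "finite SQ" and finite_SB: "finite SB"
  using finite_S by (auto simp: SA_def SQ_def SB_def)

lemma A1_pos: "A1 > 0" unfolding A1_def using SA_nonempty finite_SA wt_pos by (intro sum_pos) (auto simp: SA_def)
lemma B1_pos: "B1 > 0" unfolding B1_def using SB_nonempty finite_SB wt_pos by (intro sum_pos) (auto simp: SB_def)
lemma Q1_nonneg: "Q1 \<ge> 0" unfolding Q1_def using wt_pos by (intro sum_nonneg) (auto simp: SQ_def less_imp_le)

lemma S_split: "S = SA \<union> SQ \<union> SB"
  using step_coord d_mem unfolding SA_def SQ_def SB_def by auto

lemma sum_split: "(\<Sum>i\<in>S. f i) = (\<Sum>i\<in>SA. f i) + (\<Sum>i\<in>SQ. f i) + (\<Sum>i\<in>SB. f i)"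
proof -
  have "(\<Sum>i\<in>S. f i) = (\<Sum>i\<in>SA \<union> SQ \<union> SB. f i)" using S_split by simp
  also have "\<dots> = (\<Sum>i\<in>SA \<union> SQ. f i) + (\<Sum>i\<in>SB. f i)"
    by (rule sum.union_disjoint) (use finite_SA finite_SQ finite_SB in \<open>auto simp: SA_def SQ_def SB_def\<close>)
  also have "(\<Sum>i\<in>SA \<union> SQ. f i) = (\<Sum>i\<in>SA. f i) + (\<Sum>i\<in>SQ. f i)"
    by (rule sum.union_disjoint) (use finite_SA finite_SQ finite_SB in \<open>auto simp: SA_def SQ_def SB_def\<close>)
  finally show ?thesis .
qed

lemma W_eq: "W = A1 + Q1 + B1" unfolding W_def A1_def Q1_def B1_def by (rule sum_split)

lemma polyA_one: "polyA d S wt (\<lambda>_. 1) = of_real A1"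
  by (simp add: polyA_def A1_def SA_def)
lemma polyB_one: "polyB d S wt (\<lambda>_. 1) = of_real B1"
  by (simp add: polyB_def B1_def SB_def)
lemma A1_eq_B1: "A1 = B1" using drift polyA_one polyB_one by simp

lemma W_pos: "W > 0" using W_eq A1_pos B1_pos Q1_nonneg by simp

lemma charpoly_one: "charpoly d S wt (\<lambda>_. 1) = of_real W"
  by (simp add: charpoly_def W_def)

lemma norm_charpoly_v: "norm (charpoly d S wt v) = W"
proof -
  have "complex_of_real (cmod (charpoly d S wt v)) = of_real W"
    using v_Gamma charpoly_one by (simp add: Gamma_def)
  then show ?thesis by simp
qed

lemma v_cases_hat: "j \<in> {1..<d} \<Longrightarrow> v j = 1 \<or> v j = -1"
  using v_Gamma by (auto simp: Gamma_def)
lemma v_cases_d: "v d = 1 \<or> v d = -1 \<or> v d = \<i> \<or> v d = -\<i>"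
  using v_Gamma by (auto simp: Gamma_def)

lemma norm_v: "j \<in> {1..d} \<Longrightarrow> norm (v j) = 1"
proof -
  assume j: "j \<in> {1..d}"
  show ?thesis
  proof (cases "j = d")
    case True then show ?thesis using v_cases_d by auto
  next
    case False then have "j \<in> {1..<d}" using j by auto
    then have "v j = 1 \<or> v j = -1" by (rule v_cases_hat)
    then show ?thesis by (metis norm_one norm_minus_cancel)
  qed
qed

lemma cis_theta_v: "j \<in> {1..d} \<Longrightarrow> cis (\<theta>v j) = v j"
proof -
  assume j: "j \<in> {1..d}"
  then have "v j \<noteq> 0" using norm_v by fastforce
  then have "cis (\<theta>v j) = sgn (v j)" by (simp add: \<theta>v_def cis_Arg)
  also have "\<dots> = v j" using norm_v[OF j] by (simp add: sgn_div_norm)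
  finally show ?thesis .
qed

lemma polar_pt_v: "j \<in> {1..d} \<Longrightarrow> polar_pt d 1 \<theta>v j = v j"
  using cis_theta_v by (simp add: polar_pt_def)

lemma charpoly_v: "charpoly d S wt v = (\<Sum>i\<in>S. of_real (wt i) * cis (hat_phase d i \<theta>v + of_int (i d) * \<theta>v d))"
proof -
  have "charpoly d S wt v = charpoly d S wt (polar_pt d 1 \<theta>v)"
    by (rule charpoly_cong) (simp add: polar_pt_v)
  also have "\<dots> = (\<Sum>i\<in>S. of_real (wt i) * cis (hat_phase d i \<theta>v + of_int (i d) * \<theta>v d))"
    using d_pos by (simp add: charpoly_polar_pt)
  finally show ?thesis .
qed

text \<open>\<open>|S(w)| = S(1)\<close> is the equality case of the triangle inequality.\<close>
lemma steps_aligned_at_v: "\<exists>s. norm s = 1 \<and> (\<forall>i\<in>S. cis (hat_phase d i \<theta>v + of_int (i d) * \<theta>v d) = s)"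
proof (rule unit_vectors_eq_of_norm_sum_eq[OF finite_S, of wt "\<lambda>i. cis (hat_phase d i \<theta>v + of_int (i d) * \<theta>v d)"])
  show "\<And>i. i \<in> S \<Longrightarrow> 0 < wt i" by (rule wt_pos)
  show "\<And>i. i \<in> S \<Longrightarrow> norm (cis (hat_phase d i \<theta>v + of_int (i d) * \<theta>v d)) = 1" by (rule norm_cis)
  have "norm (charpoly d S wt v) = W" by (rule norm_charpoly_v)
  then show "norm (\<Sum>i\<in>S. of_real (wt i) * cis (hat_phase d i \<theta>v + of_int (i d) * \<theta>v d)) = (\<Sum>i\<in>S. wt i)"
    unfolding charpoly_v W_def .
qed

definition "phase0 = (SOME s. norm s = 1 \<and> (\<forall>i\<in>S. cis (hat_phase d i \<theta>v + of_int (i d) * \<theta>v d) = s))"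

lemma phase0: "norm phase0 = 1" "i \<in> S \<Longrightarrow> cis (hat_phase d i \<theta>v + of_int (i d) * \<theta>v d) = phase0"
  using someI_ex[OF steps_aligned_at_v] unfolding phase0_def by blast+

lemma cis_hat_phase_v: "cis (hat_phase d i \<theta>v) = (\<Prod>j\<in>{1..<d}. v j powi i j)"
proof -
  have "cis (hat_phase d i \<theta>v) = (\<Prod>j\<in>{1..<d}. polar_pt d 1 \<theta>v j powi i j)" by (rule prod_polar_pt_hat[symmetric])
  also have "\<dots> = (\<Prod>j\<in>{1..<d}. v j powi i j)" by (intro prod.cong refl) (simp add: polar_pt_v)
  finally show ?thesis .
qed

lemma cis_minus_hat_phase_v: "cis (- hat_phase d i \<theta>v) = cis (hat_phase d i \<theta>v)"
proof -
  have "cnj (\<Prod>j\<in>{1..<d}. v j powi i j) = (\<Prod>j\<in>{1..<d}. cnj (v j powi i j))" by simp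
  also have "\<dots> = (\<Prod>j\<in>{1..<d}. v j powi i j)"
  proof (rule prod.cong[OF refl])
    fix j assume "j \<in> {1..<d}"
    then have "v j = 1 \<or> v j = -1" by (rule v_cases_hat)
    then show "cnj (v j powi i j) = v j powi i j" by (auto simp: power_int_def)
  qed
  finally have e: "cnj (cis (hat_phase d i \<theta>v)) = cis (hat_phase d i \<theta>v)" unfolding cis_hat_phase_v .
  have "cis (- hat_phase d i \<theta>v) = cnj (cis (hat_phase d i \<theta>v))" by (simp add: cis_cnj)
  then show ?thesis using e by simp
qed

lemma cis_reflected_phase_v: "i \<in> S \<Longrightarrow> cis (hat_phase d i \<theta>v - of_int (i d) * \<theta>v d) = cnj phase0"
proof -
  assume i: "i \<in> S"
  have "cis (hat_phase d i \<theta>v - of_int (i d) * \<theta>v d) = cis (hat_phase d i \<theta>v) * cis (- (of_int (i d) * \<theta>v d))"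
    by (simp add: cis_mult)
  also have "\<dots> = cis (- hat_phase d i \<theta>v) * cis (- (of_int (i d) * \<theta>v d))" by (simp add: cis_minus_hat_phase_v)
  also have "\<dots> = cis (- (hat_phase d i \<theta>v + of_int (i d) * \<theta>v d))" by (simp add: cis_mult)
  also have "\<dots> = cnj (cis (hat_phase d i \<theta>v + of_int (i d) * \<theta>v d))" by (simp only: cis_cnj)
  also have "\<dots> = cnj phase0" using phase0(2)[OF i] by simp
  finally show ?thesis .
qed

text \<open>Up to the common phase of the steps at \<open>w\<close>, step \<open>i\<close> contributes
  \<open>step_coeff eps i * cis (phase \<theta> i)\<close> to \<open>charpoly_bar\<close> at the point with arguments \<open>\<theta>\<close>
  (see \<open>charpoly_bar_zpt_eq\<close>).\<close>
definition "offset \<theta> = (\<lambda>j. \<theta> j - \<theta>v j)"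
definition "step_coeff eps i = wt i * (1 / (1 - eps)) powi i d"
definition "phase \<theta> i = hat_phase d i (offset \<theta>) - of_int (i d) * offset \<theta> d"
definition "step_coeff_sum eps = (\<Sum>i\<in>S. step_coeff eps i)"
definition "phase_defect eps \<theta> = (\<Sum>i\<in>S. \<Sum>k\<in>S. step_coeff eps i * step_coeff eps k * (1 - cos (phase \<theta> i - phase \<theta> k)))"
definition "wt_min = Min (wt ` S)"

lemma S_nonempty: "S \<noteq> {}" using SA_nonempty unfolding SA_def by auto
lemma wt_min_pos: "wt_min > 0"
  unfolding wt_min_def using finite_S S_nonempty wt_pos by (subst Min_gr_iff) auto
lemma wt_min_le: "i \<in> S \<Longrightarrow> wt_min \<le> wt i"
  unfolding wt_min_def using finite_S by (intro Min_le) auto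

lemma theta_eq_offset: "\<theta> = (\<lambda>j. \<theta>v j + offset \<theta> j)" by (simp add: offset_def)

lemma charpoly_bar_zpt_eq:
  assumes "eps < 1"
  shows "charpoly_bar d S wt (zpt d eps \<theta>) = cnj phase0 * (\<Sum>i\<in>S. of_real (step_coeff eps i) * cis (phase \<theta> i))"
proof -
  have "charpoly_bar d S wt (zpt d eps \<theta>) =
     (\<Sum>i\<in>S. of_real (wt i * (1 / (1 - eps)) powi i d) * cis (hat_phase d i \<theta> - of_int (i d) * \<theta> d))"
    using d_pos assms by (rule charpoly_bar_zpt)
  also have "\<dots> = (\<Sum>i\<in>S. cnj phase0 * (of_real (step_coeff eps i) * cis (phase \<theta> i)))"
  proof (rule sum.cong[OF refl])
    fix i assume i: "i \<in> S"
    have "hat_phase d i \<theta> = hat_phase d i \<theta>v + hat_phase d i (offset \<theta>)"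
      by (subst theta_eq_offset) (rule hat_phase_add)
    then have "hat_phase d i \<theta> - of_int (i d) * \<theta> d = (hat_phase d i \<theta>v - of_int (i d) * \<theta>v d) + phase \<theta> i"
      by (simp add: phase_def offset_def algebra_simps)
    then have "cis (hat_phase d i \<theta> - of_int (i d) * \<theta> d) = cis (hat_phase d i \<theta>v - of_int (i d) * \<theta>v d) * cis (phase \<theta> i)"
      by (simp add: cis_mult)
    also have "\<dots> = cnj phase0 * cis (phase \<theta> i)" using cis_reflected_phase_v[OF i] by simp
    finally show "of_real (wt i * (1 / (1 - eps)) powi i d) * cis (hat_phase d i \<theta> - of_int (i d) * \<theta> d) =
        cnj phase0 * (of_real (step_coeff eps i) * cis (phase \<theta> i))" by (simp add: step_coeff_def mult_ac)
  qed
  also have "\<dots> = cnj phase0 * (\<Sum>i\<in>S. of_real (step_coeff eps i) * cis (phase \<theta> i))"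
    by (simp add: sum_distrib_left)
  finally show ?thesis .
qed

lemma norm_charpoly_bar_zpt:
  assumes "eps < 1"
  shows "norm (charpoly_bar d S wt (zpt d eps \<theta>)) = norm (\<Sum>i\<in>S. of_real (step_coeff eps i) * cis (phase \<theta> i))"
  using charpoly_bar_zpt_eq[OF assms] phase0(1) by (simp add: norm_mult)

lemma step_coeff_cases:
  assumes "i \<in> S" "eps < 1"
  shows "step_coeff eps i = wt i * (1 - eps) \<or> step_coeff eps i = wt i \<or> step_coeff eps i = wt i / (1 - eps)"
proof -
  have "i d \<in> {-1, 0, 1}" using step_coord[OF assms(1) d_mem] .
  then show ?thesis using assms(2) by (auto simp: step_coeff_def power_int_minus)
qed

lemma step_coeff_ge:
  assumes "i \<in> S" "0 \<le> eps" "eps \<le> 1/4"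
  shows "step_coeff eps i \<ge> wt_min / 2"
proof -
  have w: "wt_min \<le> wt i" "0 < wt i" using wt_min_le[OF assms(1)] wt_pos[OF assms(1)] by auto
  have "wt i / 2 \<le> wt i * (1 - eps)" using assms w by (simp add: field_simps)
  moreover have "wt i * (1 - eps) \<le> wt i" using assms w by (simp add: mult_left_le)
  moreover have "wt i \<le> wt i / (1 - eps)" using assms w by (simp add: field_simps)
  moreover have e1: "eps < 1" using assms by simp
  ultimately have "wt i / 2 \<le> step_coeff eps i" using step_coeff_cases[OF assms(1) e1] by (elim disjE; linarith)
  then show ?thesis using w by linarith
qed

lemma step_coeff_nonneg:
  assumes "i \<in> S" "0 \<le> eps" "eps \<le> 1/4"
  shows "0 \<le> step_coeff eps i"
  using step_coeff_ge[OF assms] wt_min_pos by linarith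

lemma step_coeff_sum_eq:
  assumes "eps < 1"
  shows "step_coeff_sum eps = (1 - eps) * A1 + Q1 + B1 / (1 - eps)"
proof -
  have "step_coeff_sum eps = (\<Sum>i\<in>SA. step_coeff eps i) + (\<Sum>i\<in>SQ. step_coeff eps i) + (\<Sum>i\<in>SB. step_coeff eps i)"
    unfolding step_coeff_sum_def by (rule sum_split)
  also have "(\<Sum>i\<in>SA. step_coeff eps i) = (\<Sum>i\<in>SA. wt i * (1 - eps))"
    using assms by (intro sum.cong refl) (auto simp: SA_def step_coeff_def power_int_minus)
  also have "\<dots> = (1 - eps) * A1" by (simp add: A1_def sum_distrib_left mult_ac)
  also have "(\<Sum>i\<in>SQ. step_coeff eps i) = Q1" unfolding Q1_def
    by (intro sum.cong refl) (auto simp: SQ_def step_coeff_def)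
  also have "(\<Sum>i\<in>SB. step_coeff eps i) = (\<Sum>i\<in>SB. wt i / (1 - eps))"
    by (intro sum.cong refl) (auto simp: SB_def step_coeff_def)
  also have "\<dots> = B1 / (1 - eps)" by (simp add: B1_def sum_divide_distrib)
  finally show ?thesis .
qed

text \<open>By the zero drift \<open>A1 = B1\<close> the terms of order \<open>eps\<close> cancel.\<close>
lemma step_coeff_sum_bounds:
  assumes "0 \<le> eps" "eps \<le> 1/4"
  shows "step_coeff_sum eps \<le> W + 2 * W * eps\<^sup>2" "step_coeff_sum eps \<le> 2 * W" "step_coeff_sum eps > 0"
proof -
  have e1: "eps < 1" using assms by simp
  have A: "A1 \<le> W" using W_eq Q1_nonneg B1_pos by simp
  define x where "x = eps\<^sup>2 / (1 - eps)"
  have sum_eq: "step_coeff_sum eps = W + A1 * x"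
    using step_coeff_sum_eq[OF e1] A1_eq_B1 W_eq e1 by (simp add: x_def field_simps power2_eq_square)
  have x2: "x \<le> 2 * eps\<^sup>2"
  proof -
    have "eps\<^sup>2 * 1 \<le> eps\<^sup>2 * (2 * (1 - eps))" using assms by (intro mult_left_mono) auto
    moreover have "2 * eps\<^sup>2 * (1 - eps) = eps\<^sup>2 * (2 * (1 - eps))" by algebra
    ultimately have h: "eps\<^sup>2 \<le> 2 * eps\<^sup>2 * (1 - eps)" by linarith
    have c: "0 < 1 - eps" using e1 by simp
    show ?thesis unfolding x_def pos_divide_le_eq[OF c] by (rule h)
  qed
  have x0: "0 \<le> x" using assms e1 by (simp add: x_def)
  have e2: "2 * eps\<^sup>2 \<le> 1"
  proof -
    have "eps * eps \<le> (1/4) * (1/4)" using assms by (intro mult_mono) auto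
    then show ?thesis by (simp add: power2_eq_square)
  qed
  have m1: "A1 * x \<le> W * (2 * eps\<^sup>2)" using A x2 x0 A1_pos by (intro mult_mono) auto
  have m2: "W * (2 * eps\<^sup>2) \<le> W * 1" using e2 W_pos by (intro mult_left_mono) auto
  have m3: "0 \<le> A1 * x" using A1_pos x0 by simp
  have m4: "2 * W * eps\<^sup>2 = W * (2 * eps\<^sup>2)" by simp
  show "step_coeff_sum eps \<le> W + 2 * W * eps\<^sup>2" using sum_eq m1 m4 by linarith
  show "step_coeff_sum eps \<le> 2 * W" using sum_eq m1 m2 by linarith
  show "step_coeff_sum eps > 0" using sum_eq m3 W_pos by linarith
qed

lemma phase_defect_nonneg:
  assumes "0 \<le> eps" "eps \<le> 1/4"
  shows "0 \<le> phase_defect eps \<theta>"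
  unfolding phase_defect_def using assms step_coeff_nonneg
  by (intro sum_nonneg mult_nonneg_nonneg) (auto simp: cos_le_one)

lemma phase_defect_ge_term:
  assumes "p \<in> S" "q \<in> S" "0 \<le> eps" "eps \<le> 1/4"
  shows "step_coeff eps p * step_coeff eps q * (1 - cos (phase \<theta> p - phase \<theta> q)) \<le> phase_defect eps \<theta>"
proof -
  let ?f = "\<lambda>i k. step_coeff eps i * step_coeff eps k * (1 - cos (phase \<theta> i - phase \<theta> k))"
  have nn: "\<And>i k. i \<in> S \<Longrightarrow> k \<in> S \<Longrightarrow> 0 \<le> ?f i k"
    using assms step_coeff_nonneg by (intro mult_nonneg_nonneg) auto
  have "?f p q \<le> (\<Sum>k\<in>S. ?f p k)"
    by (rule member_le_sum) (use assms nn finite_S in auto)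
  also have "\<dots> \<le> (\<Sum>i\<in>S. \<Sum>k\<in>S. ?f i k)"
    by (rule member_le_sum[of p S "\<lambda>i. \<Sum>k\<in>S. ?f i k"]) (use assms nn finite_S in \<open>auto intro: sum_nonneg\<close>)
  finally show ?thesis unfolding phase_defect_def .
qed

lemma phase_defect_ge_square:
  assumes "p \<in> S" "q \<in> S" "0 \<le> eps" "eps \<le> 1/4" "\<bar>phase \<theta> p - phase \<theta> q\<bar> \<le> 2"
  shows "(phase \<theta> p - phase \<theta> q)\<^sup>2 \<le> 16 * (phase_defect eps \<theta> / wt_min\<^sup>2)"
proof -
  have a: "wt_min / 2 \<le> step_coeff eps p" "wt_min / 2 \<le> step_coeff eps q" using step_coeff_ge assms by auto
  have "wt_min / 2 * (wt_min / 2) \<le> step_coeff eps p * step_coeff eps q"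
    using a wt_min_pos by (intro mult_mono) auto
  then have m: "wt_min\<^sup>2 / 4 \<le> step_coeff eps p * step_coeff eps q" by (simp add: power2_eq_square)
  have c: "(phase \<theta> p - phase \<theta> q)\<^sup>2 / 4 \<le> 1 - cos (phase \<theta> p - phase \<theta> q)"
    using assms(5) by (rule one_minus_cos_ge_square)
  have "wt_min\<^sup>2 / 4 * ((phase \<theta> p - phase \<theta> q)\<^sup>2 / 4) \<le> step_coeff eps p * step_coeff eps q * (1 - cos (phase \<theta> p - phase \<theta> q))"
    using m c step_coeff_nonneg[of p eps] step_coeff_nonneg[of q eps] assms by (intro mult_mono) auto
  also have "\<dots> \<le> phase_defect eps \<theta>" using phase_defect_ge_term assms by blast
  finally show ?thesis using wt_min_pos by (simp add: field_simps)
qed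

lemma phase_diff:
  "phase \<theta> p - phase \<theta> q = (\<Sum>k\<in>{1..<d}. of_int (p k - q k) * offset \<theta> k) - of_int (p d - q d) * offset \<theta> d"
  unfolding phase_def hat_phase_def by (simp add: sum_subtractf algebra_simps)

text \<open>The phase defect controls \<open>offset\<close>: reflecting a step in axis \<open>j < d\<close> changes its phase by
  \<open>2 * offset \<theta> j\<close>, and an up-step and a down-step differ by \<open>2 * offset \<theta> d\<close> plus hat terms.\<close>
lemma phase_pair_hat:
  assumes j: "j \<in> {1..<d}"
  shows "\<exists>p\<in>S. \<exists>q\<in>S. phase \<theta> p - phase \<theta> q = 2 * offset \<theta> j"
proof -
  have jd: "j \<in> {1..d}" using j by auto
  obtain p where p: "p \<in> S" "p j = 1" using dirs jd unfolding all_directions_def by blast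
  define q where "q = reflect j p"
  have q: "q \<in> S" using sym_steps j p unfolding symmetric_first_def q_def by blast
  have jnd: "j \<noteq> d" using j by auto
  have qv: "q k = (if k = j then - p j else p k)" for k by (simp add: q_def reflect_def)
  have "(\<Sum>k\<in>{1..<d}. of_int (p k - q k) * offset \<theta> k) = (\<Sum>k\<in>{1..<d}. if k = j then 2 * offset \<theta> j else 0)"
    by (intro sum.cong refl) (simp add: qv p(2))
  also have "\<dots> = 2 * offset \<theta> j" using j by (simp add: sum.delta)
  finally have "phase \<theta> p - phase \<theta> q = 2 * offset \<theta> j" using jnd by (simp add: phase_diff qv)
  then show ?thesis using p q by blast
qed

lemma phase_pair_last:
  "\<exists>p\<in>S. \<exists>q\<in>S. phase \<theta> p - phase \<theta> q = (\<Sum>k\<in>{1..<d}. of_int (p k - q k) * offset \<theta> k) - 2 * offset \<theta> d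
     \<and> (\<forall>k\<in>{1..<d}. \<bar>p k - q k\<bar> \<le> 2)"
proof -
  obtain p where p: "p \<in> S" "p d = 1" using dirs d_mem unfolding all_directions_def by blast
  obtain q where q: "q \<in> S" "q d = -1" using dirs d_mem unfolding all_directions_def by blast
  have "\<forall>k\<in>{1..<d}. \<bar>p k - q k\<bar> \<le> 2"
  proof
    fix k assume "k \<in> {1..<d}"
    then have "k \<in> {1..d}" by auto
    then show "\<bar>p k - q k\<bar> \<le> 2" using abs_step_coord_le[OF p(1)] abs_step_coord_le[OF q(1)] by fastforce
  qed
  moreover have "phase \<theta> p - phase \<theta> q = (\<Sum>k\<in>{1..<d}. of_int (p k - q k) * offset \<theta> k) - 2 * offset \<theta> d"
    by (simp add: phase_diff p(2) q(2))
  ultimately show ?thesis using p q by blast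
qed

lemma card_hat: "real (card {1..<d}) = real d - 1" using d_pos by (simp add: of_nat_diff)

lemma offset_hat_square_le:
  assumes e: "0 \<le> eps" "eps \<le> 1/4" and j: "j \<in> {1..<d}" and small: "\<bar>offset \<theta> j\<bar> \<le> 1"
  shows "(offset \<theta> j)\<^sup>2 \<le> 4 * (phase_defect eps \<theta> / wt_min\<^sup>2)"
proof -
  obtain p q where "p \<in> S" "q \<in> S" "phase \<theta> p - phase \<theta> q = 2 * offset \<theta> j"
    using phase_pair_hat[OF j] by blast
  then have "(2 * offset \<theta> j)\<^sup>2 \<le> 16 * (phase_defect eps \<theta> / wt_min\<^sup>2)"
    using phase_defect_ge_square[OF _ _ e, of p q \<theta>] small by simp
  then show ?thesis by (simp add: power2_eq_square)
qed

lemma offset_last_square_le: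
  assumes e: "0 \<le> eps" "eps \<le> 1/4" and box: "\<forall>j\<in>{1..d}. \<bar>offset \<theta> j\<bar> \<le> \<delta>"
    and dl: "real d * \<delta> \<le> 1"
  shows "(offset \<theta> d)\<^sup>2 \<le> 8 * (phase_defect eps \<theta> / wt_min\<^sup>2)
           + (real d - 1) * (2 * (\<Sum>j\<in>{1..<d}. (offset \<theta> j)\<^sup>2))"
proof -
  obtain p q where pq: "p \<in> S" "q \<in> S"
      "phase \<theta> p - phase \<theta> q = (\<Sum>k\<in>{1..<d}. of_int (p k - q k) * offset \<theta> k) - 2 * offset \<theta> d"
      "\<forall>k\<in>{1..<d}. \<bar>p k - q k\<bar> \<le> 2"
    using phase_pair_last by blast
  have c: "\<bar>real_of_int (p k - q k)\<bar> \<le> 2" if "k \<in> {1..<d}" for k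
  proof -
    have "real_of_int \<bar>p k - q k\<bar> \<le> real_of_int 2" using pq(4) that by (simp only: of_int_le_iff)
    then show ?thesis by simp
  qed
  define L where "L = (\<Sum>k\<in>{1..<d}. of_int (p k - q k) * offset \<theta> k)"
  have "L\<^sup>2 \<le> (\<Sum>k\<in>{1..<d}. (real_of_int (p k - q k))\<^sup>2) * (\<Sum>k\<in>{1..<d}. (offset \<theta> k)\<^sup>2)"
    unfolding L_def by (rule Cauchy_Schwarz_ineq_sum)
  also have "(\<Sum>k\<in>{1..<d}. (real_of_int (p k - q k))\<^sup>2) \<le> (\<Sum>k\<in>{1..<d}. 2\<^sup>2)"
    using c by (intro sum_mono) (metis abs_le_square_iff abs_numeral power2_abs)
  then have "(\<Sum>k\<in>{1..<d}. (real_of_int (p k - q k))\<^sup>2) * (\<Sum>k\<in>{1..<d}. (offset \<theta> k)\<^sup>2)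
      \<le> (real d - 1) * 4 * (\<Sum>k\<in>{1..<d}. (offset \<theta> k)\<^sup>2)"
    using card_hat by (intro mult_right_mono) (auto intro: sum_nonneg)
  finally have Lsq: "L\<^sup>2 \<le> (real d - 1) * 4 * (\<Sum>k\<in>{1..<d}. (offset \<theta> k)\<^sup>2)" .
  have "\<bar>L\<bar> \<le> (\<Sum>k\<in>{1..<d}. \<bar>of_int (p k - q k) * offset \<theta> k\<bar>)" unfolding L_def by (rule sum_abs)
  also have "\<dots> \<le> (\<Sum>k\<in>{1..<d}. 2 * \<delta>)"
  proof (rule sum_mono)
    fix k assume k: "k \<in> {1..<d}"
    have "\<bar>offset \<theta> k\<bar> \<le> \<delta>" using box k by force
    then show "\<bar>of_int (p k - q k) * offset \<theta> k\<bar> \<le> 2 * \<delta>"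
      using c[OF k] by (simp add: abs_mult mult_mono)
  qed
  finally have "\<bar>L\<bar> \<le> 2 * ((real d - 1) * \<delta>)" using card_hat by simp
  moreover have "\<bar>offset \<theta> d\<bar> \<le> \<delta>" using box d_mem by blast
  ultimately have "\<bar>L - 2 * offset \<theta> d\<bar> \<le> 2" using dl by (simp add: algebra_simps)
  then have ld: "(L - 2 * offset \<theta> d)\<^sup>2 \<le> 16 * (phase_defect eps \<theta> / wt_min\<^sup>2)"
    using phase_defect_ge_square[OF pq(1,2) e, of \<theta>] pq(3) by (simp add: L_def)
  have "4 * (offset \<theta> d)\<^sup>2 \<le> 2 * (L - 2 * offset \<theta> d)\<^sup>2 + 2 * L\<^sup>2"
    using zero_le_power2[of "L - offset \<theta> d"] by (simp add: power2_eq_square algebra_simps)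
  then show ?thesis using ld Lsq by (simp add: algebra_simps)
qed

lemma sum_offset_square_le:
  assumes e: "0 \<le> eps" "eps \<le> 1/4" and box: "\<forall>j\<in>{1..d}. \<bar>offset \<theta> j\<bar> \<le> \<delta>"
    and dl: "real d * \<delta> \<le> 1" and d0: "0 \<le> \<delta>"
  shows "(\<Sum>j\<in>{1..d}. (offset \<theta> j)\<^sup>2) \<le> 16 * (real d)\<^sup>2 * (phase_defect eps \<theta> / wt_min\<^sup>2)"
proof -
  define E where "E = phase_defect eps \<theta> / wt_min\<^sup>2"
  define Th where "Th = (\<Sum>j\<in>{1..<d}. (offset \<theta> j)\<^sup>2)"
  have E0: "0 \<le> E" using phase_defect_nonneg[OF e] by (simp add: E_def)
  have rd: "real d \<ge> 1" using d_pos by simp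
  have "1 * \<delta> \<le> real d * \<delta>" by (rule mult_right_mono[OF rd d0])
  then have "\<delta> \<le> 1" using dl by linarith
  then have "Th \<le> (\<Sum>j\<in>{1..<d}. 4 * E)"
    unfolding Th_def E_def using box by (intro sum_mono offset_hat_square_le[OF e]) force+
  then have Th: "Th \<le> (real d - 1) * (4 * E)" using card_hat by simp
  have "(\<Sum>j\<in>{1..d}. (offset \<theta> j)\<^sup>2) = Th + (offset \<theta> d)\<^sup>2"
  proof -
    have "{1..d} = insert d {1..<d}" using d_pos by auto
    then show ?thesis by (simp add: Th_def)
  qed
  also have "\<dots> \<le> Th + 8 * E + (real d - 1) * (2 * Th)"
    using offset_last_square_le[OF e box dl] by (simp add: E_def Th_def)
  also have "\<dots> \<le> (real d - 1) * (4 * E) + 8 * E + (real d - 1) * (2 * ((real d - 1) * (4 * E)))"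
    using Th rd by (intro add_mono mult_left_mono) auto
  also have "\<dots> = E * (8 * (real d)\<^sup>2 - 12 * real d + 12)" by (simp add: power2_eq_square algebra_simps)
  also have "\<dots> \<le> E * (16 * (real d)\<^sup>2)"
  proof (rule mult_left_mono[OF _ E0])
    have "real d \<le> (real d)\<^sup>2" using rd by (simp add: power2_eq_square)
    then show "8 * (real d)\<^sup>2 - 12 * real d + 12 \<le> 16 * (real d)\<^sup>2" using rd by linarith
  qed
  finally show ?thesis by (simp add: E_def mult_ac)
qed

definition "gauss_rate = wt_min\<^sup>2 / (64 * (real d)\<^sup>2 * W\<^sup>2)"

lemma gauss_rate_pos: "gauss_rate > 0" unfolding gauss_rate_def using wt_min_pos W_pos d_pos by simp

lemma norm_charpoly_bar_le:
  assumes e: "0 \<le> eps" "eps \<le> 1/4" and box: "\<forall>j\<in>{1..d}. \<bar>offset \<theta> j\<bar> \<le> \<delta>"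
    and dl: "real d * \<delta> \<le> 1" and d0: "0 \<le> \<delta>"
  shows "norm (charpoly_bar d S wt (zpt d eps \<theta>)) \<le> W * (1 + 2 * eps\<^sup>2 - gauss_rate * (\<Sum>j\<in>{1..d}. (offset \<theta> j)\<^sup>2))"
proof -
  define T where "T = (\<Sum>j\<in>{1..d}. (offset \<theta> j)\<^sup>2)"
  define x where "x = norm (\<Sum>i\<in>S. of_real (step_coeff eps i) * cis (phase \<theta> i))"
  have e1: "eps < 1" using e by simp
  have xeq: "norm (charpoly_bar d S wt (zpt d eps \<theta>)) = x" unfolding x_def by (rule norm_charpoly_bar_zpt[OF e1])
  have x2: "x\<^sup>2 = (step_coeff_sum eps)\<^sup>2 - phase_defect eps \<theta>"
    unfolding x_def step_coeff_sum_def phase_defect_def by (rule norm_sum_cis_squared)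
  have sum_bounds: "step_coeff_sum eps \<le> W + 2 * W * eps\<^sup>2" "step_coeff_sum eps \<le> 2 * W" "step_coeff_sum eps > 0" using step_coeff_sum_bounds[OF e] by auto
  have D0: "0 \<le> phase_defect eps \<theta>" by (rule phase_defect_nonneg[OF e])
  have x1: "x \<le> step_coeff_sum eps - phase_defect eps \<theta> / (2 * step_coeff_sum eps)"
    by (rule le_diff_div_of_square_le) (use x2 D0 sum_bounds in \<open>auto simp: x_def\<close>)
  have "phase_defect eps \<theta> / (4 * W) \<le> phase_defect eps \<theta> / (2 * step_coeff_sum eps)"
    by (rule divide_left_mono) (use sum_bounds D0 W_pos in auto)
  moreover have "W * (gauss_rate * T) \<le> phase_defect eps \<theta> / (4 * W)"
  proof -
    have T: "T \<le> 16 * (real d)\<^sup>2 * (phase_defect eps \<theta> / wt_min\<^sup>2)" unfolding T_def by (rule sum_offset_square_le[OF e box dl d0])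
    have w2: "wt_min\<^sup>2 > 0" using wt_min_pos by simp
    have d2: "(real d)\<^sup>2 > 0" using d_pos by simp
    have "W * (gauss_rate * T) = T * wt_min\<^sup>2 / (64 * (real d)\<^sup>2 * W)" using W_pos by (simp add: gauss_rate_def power2_eq_square field_simps)
    also have "\<dots> \<le> (16 * (real d)\<^sup>2 * (phase_defect eps \<theta> / wt_min\<^sup>2)) * wt_min\<^sup>2 / (64 * (real d)\<^sup>2 * W)"
      using T w2 d2 W_pos by (intro divide_right_mono mult_right_mono) auto
    also have "\<dots> = phase_defect eps \<theta> / (4 * W)" using w2 d2 W_pos by (simp add: field_simps)
    finally show ?thesis .
  qed
  ultimately have "x \<le> W + 2 * W * eps\<^sup>2 - W * (gauss_rate * T)" using x1 sum_bounds by linarith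
  also have "\<dots> = W * (1 + 2 * eps\<^sup>2 - gauss_rate * T)" by (simp add: algebra_simps)
  finally show ?thesis unfolding xeq T_def .
qed

lemma norm_charpoly_bar_power_le:
  assumes e: "0 \<le> eps" "eps \<le> 1/4" and box: "\<forall>j\<in>{1..d}. \<bar>offset \<theta> j\<bar> \<le> \<delta>"
    and dl: "real d * \<delta> \<le> 1" and d0: "0 \<le> \<delta>"
  shows "norm (charpoly_bar d S wt (zpt d eps \<theta>)) ^ n \<le>
    W ^ n * (exp (real n * (2 * eps\<^sup>2)) * exp (- (real n * (gauss_rate * (\<Sum>j\<in>{1..d}. (offset \<theta> j)\<^sup>2)))))"
proof -
  have "norm (charpoly_bar d S wt (zpt d eps \<theta>)) \<le> W * (1 + 2 * eps\<^sup>2 - gauss_rate * (\<Sum>j\<in>{1..d}. (offset \<theta> j)\<^sup>2))"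
    by (rule norm_charpoly_bar_le[OF assms])
  then have "norm (charpoly_bar d S wt (zpt d eps \<theta>)) ^ n \<le>
      W ^ n * exp (real n * (2 * eps\<^sup>2 - gauss_rate * (\<Sum>j\<in>{1..d}. (offset \<theta> j)\<^sup>2)))"
    by (intro power_le_exp_of_le) (use W_pos in \<open>auto simp: algebra_simps\<close>)
  then show ?thesis by (simp add: right_diff_distrib exp_diff exp_minus divide_inverse)
qed

section \<open>The prefactor\<close>

abbreviation "zp eps \<theta> \<equiv> zpt d eps \<theta>"

lemma zp_hat: "j \<noteq> d \<Longrightarrow> zp eps \<theta> j = cis (\<theta> j)" by (simp add: zpt_def)
lemma zp_d: "zp eps \<theta> d = of_real (1 - eps) * cis (\<theta> d)" by (simp add: zpt_def)

lemma norm_zp_d: assumes "eps \<le> 1" shows "norm (zp eps \<theta> d) = 1 - eps"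
proof -
  have "norm (zp eps \<theta> d) = norm (complex_of_real (1 - eps)) * norm (cis (\<theta> d))" by (simp only: zp_d norm_mult)
  also have "norm (complex_of_real (1 - eps)) = 1 - eps" by (simp only: norm_of_real) (simp add: assms)
  finally show ?thesis by simp
qed

lemma norm_prod_zp:
  assumes "eps \<le> 1"
  shows "norm (\<Prod>j\<in>{1..d}. zp eps \<theta> j) = 1 - eps"
proof -
  have e: "{1..d} = insert d {1..<d}" using d_pos by auto
  have "norm (\<Prod>j\<in>{1..d}. zp eps \<theta> j) = (\<Prod>j\<in>{1..d}. norm (zp eps \<theta> j))" by (simp add: prod_norm)
  also have "\<dots> = norm (zp eps \<theta> d) * (\<Prod>j\<in>{1..<d}. norm (zp eps \<theta> j))" unfolding e by simp
  also have "(\<Prod>j\<in>{1..<d}. norm (zp eps \<theta> j)) = 1" by (intro prod.neutral) (simp add: zp_hat)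
  finally show ?thesis using norm_zp_d[OF assms] by simp
qed

lemma norm_prod_izp:
  assumes "0 \<le> eps" "eps \<le> 1"
  shows "norm (\<Prod>j\<in>{1..d}. \<i> * zp eps \<theta> j) \<le> 1"
proof -
  have "norm (\<Prod>j\<in>{1..d}. \<i> * zp eps \<theta> j) = (\<Prod>j\<in>{1..d}. norm (zp eps \<theta> j))"
    by (simp add: prod_norm[symmetric] norm_mult)
  also have "\<dots> = 1 - eps" using norm_prod_zp[OF assms(2)] by (simp add: prod_norm)
  finally show ?thesis using assms by simp
qed

lemma prod_hat_powi_eq_cis: "(\<Prod>j\<in>{1..<d}. z j powi i j) = cis (hat_phase d i \<theta>)" if "\<And>j. j \<in> {1..<d} \<Longrightarrow> z j = polar_pt d r \<theta> j"
proof -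
  have "(\<Prod>j\<in>{1..<d}. z j powi i j) = (\<Prod>j\<in>{1..<d}. polar_pt d r \<theta> j powi i j)"
    by (intro prod.cong refl) (simp add: that)
  then show ?thesis by (simp only: prod_polar_pt_hat)
qed

lemma polyB_zp: "polyB d S wt (zp eps \<theta>) = (\<Sum>i\<in>SB. of_real (wt i) * cis (hat_phase d i \<theta>))"
  unfolding polyB_def SB_def
  by (intro sum.cong refl) (rule arg_cong[where f="\<lambda>x. _ * x"], rule prod_hat_powi_eq_cis[where r="1-eps"], simp add: zpt_eq_polar_pt)
lemma polyA_zp: "polyA d S wt (zp eps \<theta>) = (\<Sum>i\<in>SA. of_real (wt i) * cis (hat_phase d i \<theta>))"
  unfolding polyA_def SA_def
  by (intro sum.cong refl) (rule arg_cong[where f="\<lambda>x. _ * x"], rule prod_hat_powi_eq_cis[where r="1-eps"], simp add: zpt_eq_polar_pt)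
lemma polyB_v0: "polyB d S wt v = (\<Sum>i\<in>SB. of_real (wt i) * cis (hat_phase d i \<theta>v))"
  unfolding polyB_def SB_def
  by (intro sum.cong refl) (rule arg_cong[where f="\<lambda>x. _ * x"], rule prod_hat_powi_eq_cis[where r="1"], simp add: polar_pt_v)
lemma polyA_v0: "polyA d S wt v = (\<Sum>i\<in>SA. of_real (wt i) * cis (hat_phase d i \<theta>v))"
  unfolding polyA_def SA_def
  by (intro sum.cong refl) (rule arg_cong[where f="\<lambda>x. _ * x"], rule prod_hat_powi_eq_cis[where r="1"], simp add: polar_pt_v)

lemma cis_theta_v_d: "cis (\<theta>v d) = v d" using cis_theta_v[OF d_mem] .

lemma SB_phase: "i \<in> SB \<Longrightarrow> cis (hat_phase d i \<theta>v) = phase0 * cnj (v d)"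
proof -
  assume i: "i \<in> SB"
  then have iS: "i \<in> S" and id: "i d = 1" by (auto simp: SB_def)
  have "phase0 = cis (hat_phase d i \<theta>v + \<theta>v d)" using phase0(2)[OF iS] id by simp
  also have "\<dots> = cis (hat_phase d i \<theta>v) * v d" by (simp add: cis_mult[symmetric] cis_theta_v_d)
  finally have "phase0 * cnj (v d) = cis (hat_phase d i \<theta>v) * (v d * cnj (v d))" by (simp add: mult_ac)
  also have "v d * cnj (v d) = 1" using norm_v[OF d_mem] complex_norm_square[of "v d"] by simp
  finally show ?thesis by simp
qed

lemma SA_phase: "i \<in> SA \<Longrightarrow> cis (hat_phase d i \<theta>v) = phase0 * v d"
proof -
  assume i: "i \<in> SA"
  then have iS: "i \<in> S" and id: "i d = -1" by (auto simp: SA_def)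
  have "phase0 = cis (hat_phase d i \<theta>v - \<theta>v d)" using phase0(2)[OF iS] id by simp
  also have "\<dots> = cis (hat_phase d i \<theta>v) * cis (- \<theta>v d)" by (simp add: cis_mult)
  also have "cis (- \<theta>v d) = cnj (v d)" by (simp add: cis_cnj[symmetric] cis_theta_v_d)
  finally have "phase0 * v d = cis (hat_phase d i \<theta>v) * (v d * cnj (v d))" by (simp add: mult_ac)
  also have "v d * cnj (v d) = 1" using norm_v[OF d_mem] complex_norm_square[of "v d"] by simp
  finally show ?thesis by simp
qed

lemma polyB_v: "polyB d S wt v = of_real B1 * (phase0 * cnj (v d))"
  unfolding polyB_v0 B1_def by (simp add: SB_phase sum_distrib_right)
lemma polyA_v: "polyA d S wt v = of_real A1 * (phase0 * v d)"
  unfolding polyA_v0 A1_def by (simp add: SA_phase sum_distrib_right)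

lemma polyA_v_eq_polyB_v: "v d = 1 \<or> v d = -1 \<Longrightarrow> polyA d S wt v = polyB d S wt v"
  using A1_eq_B1 by (auto simp: polyA_v polyB_v)

lemma norm_polyB_v: "norm (polyB d S wt v) = B1"
  using B1_pos phase0(1) norm_v[OF d_mem] by (simp add: polyB_v norm_mult)

lemma norm_sum_cis_hat_phase_diff_le:
  assumes box: "\<forall>j\<in>{1..d}. \<bar>offset \<theta> j\<bar> \<le> \<delta>" and d0: "0 \<le> \<delta>" and T: "T \<subseteq> S"
  shows "norm ((\<Sum>i\<in>T. of_real (wt i) * cis (hat_phase d i \<theta>)) - (\<Sum>i\<in>T. of_real (wt i) * cis (hat_phase d i \<theta>v)))
           \<le> (\<Sum>i\<in>T. wt i) * (real d * \<delta>)"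
proof -
  have "norm ((\<Sum>i\<in>T. of_real (wt i) * cis (hat_phase d i \<theta>)) - (\<Sum>i\<in>T. of_real (wt i) * cis (hat_phase d i \<theta>v)))
      = norm (\<Sum>i\<in>T. of_real (wt i) * (cis (hat_phase d i \<theta>) - cis (hat_phase d i \<theta>v)))"
    by (simp add: sum_subtractf algebra_simps)
  also have "\<dots> \<le> (\<Sum>i\<in>T. norm (of_real (wt i) * (cis (hat_phase d i \<theta>) - cis (hat_phase d i \<theta>v))))"
    by (rule norm_sum)
  also have "\<dots> \<le> (\<Sum>i\<in>T. wt i * (real d * \<delta>))"
  proof (rule sum_mono)
    fix i assume i: "i \<in> T"
    then have iS: "i \<in> S" using T by auto
    have "hat_phase d i \<theta> = hat_phase d i \<theta>v + hat_phase d i (offset \<theta>)" by (subst theta_eq_offset) (rule hat_phase_add)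
    then have "norm (cis (hat_phase d i \<theta>) - cis (hat_phase d i \<theta>v)) \<le> \<bar>hat_phase d i (offset \<theta>)\<bar>"
      using norm_cis_diff_le[of "hat_phase d i \<theta>" "hat_phase d i \<theta>v"] by simp
    also have "\<dots> \<le> real d * \<delta>"
      by (rule abs_hat_phase_le) (use abs_step_coord_le[OF iS] box d0 in auto)
    finally have "norm (cis (hat_phase d i \<theta>) - cis (hat_phase d i \<theta>v)) \<le> real d * \<delta>" .
    then show "norm (of_real (wt i) * (cis (hat_phase d i \<theta>) - cis (hat_phase d i \<theta>v))) \<le> wt i * (real d * \<delta>)"
      using wt_pos[OF iS] by (simp add: norm_mult mult_left_mono)
  qed
  also have "\<dots> = (\<Sum>i\<in>T. wt i) * (real d * \<delta>)" by (simp add: sum_distrib_right)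
  finally show ?thesis .
qed

lemma norm_polyB_zp_diff_le:
  assumes "\<forall>j\<in>{1..d}. \<bar>offset \<theta> j\<bar> \<le> \<delta>" "0 \<le> \<delta>"
  shows "norm (polyB d S wt (zp eps \<theta>) - polyB d S wt v) \<le> B1 * (real d * \<delta>)"
  using norm_sum_cis_hat_phase_diff_le[OF assms, of SB] unfolding polyB_zp polyB_v0 B1_def by (auto simp: SB_def)

lemma norm_polyA_zp_diff_le:
  assumes "\<forall>j\<in>{1..d}. \<bar>offset \<theta> j\<bar> \<le> \<delta>" "0 \<le> \<delta>"
  shows "norm (polyA d S wt (zp eps \<theta>) - polyA d S wt v) \<le> A1 * (real d * \<delta>)"
  using norm_sum_cis_hat_phase_diff_le[OF assms, of SA] unfolding polyA_zp polyA_v0 A1_def by (auto simp: SA_def)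

lemma norm_polyA_zp: "norm (polyA d S wt (zp eps \<theta>)) \<le> A1"
proof -
  have "norm (polyA d S wt (zp eps \<theta>)) \<le> (\<Sum>i\<in>SA. norm (of_real (wt i) * cis (hat_phase d i \<theta>)))"
    unfolding polyA_zp by (rule norm_sum)
  also have "\<dots> = A1" unfolding A1_def using wt_pos by (intro sum.cong refl) (auto simp: SA_def norm_mult abs_of_pos)
  finally show ?thesis .
qed

lemma norm_polyB_zp: "norm (polyB d S wt (zp eps \<theta>)) \<le> B1"
proof -
  have "norm (polyB d S wt (zp eps \<theta>)) \<le> (\<Sum>i\<in>SB. norm (of_real (wt i) * cis (hat_phase d i \<theta>)))"
    unfolding polyB_zp by (rule norm_sum)
  also have "\<dots> = B1" unfolding B1_def using wt_pos by (intro sum.cong refl) (auto simp: SB_def norm_mult abs_of_pos)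
  finally show ?thesis .
qed

definition "prefactor eps \<theta> = (\<Prod>j\<in>{1..<d}. 1 + zp eps \<theta> j) / (polyB d S wt (zp eps \<theta>) * (\<Prod>j\<in>{1..d}. zp eps \<theta> j))
     * ((polyB d S wt (zp eps \<theta>) - (zp eps \<theta> d)^2 * polyA d S wt (zp eps \<theta>)) / (1 - zp eps \<theta> d))"

lemma integrand_eq_prefactor: "integrand d S wt n (zp eps \<theta>) = prefactor eps \<theta> * charpoly_bar d S wt (zp eps \<theta>) ^ n"
  by (simp add: integrand_def prefactor_def)

lemma v_d_eq_minus_one: assumes "\<forall>j\<in>{1..<d}. v j = 1" shows "v d = -1"
proof -
  have nd: "v d \<noteq> 1"
  proof
    assume "v d = 1"
    then have "\<forall>j\<in>{1..d}. v j = 1" using assms by (metis atLeastAtMost_iff atLeastLessThan_iff le_neq_implies_less)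
    then show False using v_ne_one by blast
  qed
  obtain a where a: "a \<in> SA" using SA_nonempty by blast
  obtain b where b: "b \<in> SB" using SB_nonempty by blast
  have one: "cis (hat_phase d i \<theta>v) = 1" for i
    unfolding cis_hat_phase_v by (intro prod.neutral) (simp add: assms)
  have "1 = phase0 * v d" using SA_phase[OF a] one by simp
  moreover have "1 = phase0 * cnj (v d)" using SB_phase[OF b] one by simp
  ultimately have "phase0 * v d = phase0 * cnj (v d)" by simp
  moreover have "phase0 \<noteq> 0" using phase0(1) by auto
  ultimately have r: "v d = cnj (v d)" by simp
  have "v d \<noteq> \<i>" using r by (auto simp: complex_eq_iff)
  moreover have "v d \<noteq> -\<i>" using r by (auto simp: complex_eq_iff)
  ultimately show ?thesis using v_cases_d nd by auto
qed

definition "prefactor_const = 2 ^ d * 16 * (real d + 2)"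

lemma prefactor_const_pos: "prefactor_const > 0" unfolding prefactor_const_def by simp

context
  fixes eps \<delta> :: real and \<theta> :: "nat \<Rightarrow> real"
  assumes e0: "0 < eps" and e1: "eps \<le> 1/4" and d0: "0 \<le> \<delta>" and dl: "real d * \<delta> \<le> 1/4"
    and box: "\<forall>j\<in>{1..d}. \<bar>offset \<theta> j\<bar> \<le> \<delta>"
begin

lemma delta_le: "\<delta> \<le> 1/4"
proof -
  have "1 * \<delta> \<le> real d * \<delta>" using d_pos d0 by (intro mult_right_mono) auto
  then show ?thesis using dl by linarith
qed

lemma norm_denominator_ge: "norm (polyB d S wt (zp eps \<theta>) * (\<Prod>j\<in>{1..d}. zp eps \<theta> j)) \<ge> B1 / 4"
proof -
  have "norm (polyB d S wt v) - norm (polyB d S wt (zp eps \<theta>) - polyB d S wt v) \<le> norm (polyB d S wt (zp eps \<theta>))"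
    using norm_triangle_ineq2[of "polyB d S wt v" "polyB d S wt v - polyB d S wt (zp eps \<theta>)"]
    by (simp add: norm_minus_commute)
  moreover have "norm (polyB d S wt (zp eps \<theta>) - polyB d S wt v) \<le> B1 * (real d * \<delta>)"
    by (rule norm_polyB_zp_diff_le[OF box d0])
  moreover have "B1 * (real d * \<delta>) \<le> B1 * (1/4)" using dl B1_pos by (intro mult_left_mono) auto
  ultimately have b: "3/4 * B1 \<le> norm (polyB d S wt (zp eps \<theta>))" using norm_polyB_v by linarith
  have p: "norm (\<Prod>j\<in>{1..d}. zp eps \<theta> j) = 1 - eps" using e1 by (intro norm_prod_zp) simp
  have "(3/4 * B1) * (3/4) \<le> norm (polyB d S wt (zp eps \<theta>)) * (1 - eps)"
    using b e1 B1_pos by (intro mult_mono) auto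
  then show ?thesis using B1_pos p by (simp add: norm_mult)
qed

lemma norm_one_plus_zp_hat_le: "j \<in> {1..<d} \<Longrightarrow> norm (1 + zp eps \<theta> j) \<le> 2"
proof -
  assume j: "j \<in> {1..<d}"
  have "norm (1 + zp eps \<theta> j) \<le> norm (1::complex) + norm (zp eps \<theta> j)" by (rule norm_triangle_ineq)
  then show ?thesis using j by (simp add: zp_hat)
qed

lemma norm_prod_one_plus_le: "norm (\<Prod>j\<in>{1..<d}. 1 + zp eps \<theta> j) \<le> 2 ^ d"
proof -
  have "norm (\<Prod>j\<in>{1..<d}. 1 + zp eps \<theta> j) = (\<Prod>j\<in>{1..<d}. norm (1 + zp eps \<theta> j))" by (simp add: prod_norm)
  also have "\<dots> \<le> 2 ^ d" by (rule prod_le_power) (use norm_one_plus_zp_hat_le in auto)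
  finally show ?thesis .
qed

lemma norm_prod_one_plus_le_delta:
  assumes j0: "j0 \<in> {1..<d}" "v j0 \<noteq> 1"
  shows "norm (\<Prod>j\<in>{1..<d}. 1 + zp eps \<theta> j) \<le> 2 ^ d * \<delta>"
proof -
  have vj: "v j0 = -1" using v_cases_hat[OF j0(1)] j0(2) by auto
  have j0d: "j0 \<in> {1..d}" using j0 by auto
  have "1 + zp eps \<theta> j0 = cis (\<theta> j0) - cis (\<theta>v j0)" using j0 cis_theta_v[OF j0d] vj by (simp add: zp_hat)
  then have "norm (1 + zp eps \<theta> j0) \<le> \<bar>\<theta> j0 - \<theta>v j0\<bar>" using norm_cis_diff_le by simp
  also have "\<dots> \<le> \<delta>" using box j0d by (simp add: offset_def)
  finally have a: "norm (1 + zp eps \<theta> j0) \<le> \<delta>" .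
  have e: "{1..<d} = insert j0 ({1..<d} - {j0})" using j0 by auto
  have "norm (\<Prod>j\<in>{1..<d}. 1 + zp eps \<theta> j) = (\<Prod>j\<in>{1..<d}. norm (1 + zp eps \<theta> j))" by (simp add: prod_norm)
  also have "\<dots> = norm (1 + zp eps \<theta> j0) * (\<Prod>j\<in>{1..<d} - {j0}. norm (1 + zp eps \<theta> j))"
    by (rule prod.remove) (use j0 in auto)
  also have "\<dots> \<le> \<delta> * 2 ^ d"
  proof (rule mult_mono[OF a])
    have c: "card ({1..<d} - {j0}) \<le> d"
    proof -
      have "card ({1..<d} - {j0}) \<le> card {1..<d}" by (rule card_mono) auto
      then show ?thesis by simp
    qed
    show "(\<Prod>j\<in>{1..<d} - {j0}. norm (1 + zp eps \<theta> j)) \<le> 2 ^ d"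
      by (rule prod_le_power) (use norm_one_plus_zp_hat_le c in auto)
  qed (use d0 in \<open>auto intro: prod_nonneg\<close>)
  finally show ?thesis by (simp add: mult.commute)
qed

lemma norm_v_d_minus_zp_d_le: "norm (v d - zp eps \<theta> d) \<le> \<delta> + eps"
proof -
  have "norm (v d - cis (\<theta> d)) \<le> \<delta>"
  proof -
    have "norm (cis (\<theta>v d) - cis (\<theta> d)) \<le> \<bar>\<theta>v d - \<theta> d\<bar>" by (rule norm_cis_diff_le)
    also have "\<dots> \<le> \<delta>" using box d_mem by (simp add: offset_def abs_minus_commute)
    finally show ?thesis using cis_theta_v_d by simp
  qed
  moreover have "norm (cis (\<theta> d) - zp eps \<theta> d) = eps"
  proof -
    have "cis (\<theta> d) - zp eps \<theta> d = of_real eps * cis (\<theta> d)" by (simp add: zp_d algebra_simps)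
    then show ?thesis using e0 by (simp add: norm_mult)
  qed
  ultimately show ?thesis by (intro norm_diff_triangle_le) auto
qed

lemma norm_one_minus_zp_d_ge_eps: "norm (1 - zp eps \<theta> d) \<ge> eps"
proof -
  have "norm (1::complex) - norm (zp eps \<theta> d) \<le> norm (1 - zp eps \<theta> d)" by (rule norm_triangle_ineq2)
  then show ?thesis using norm_zp_d[of eps \<theta>] e1 by simp
qed

lemma norm_one_minus_zp_d_ge_half: assumes "v d \<noteq> 1" shows "norm (1 - zp eps \<theta> d) \<ge> 1/2"
proof -
  have "norm (1 - v d) \<ge> 1"
  proof -
    have "v d = -1 \<or> v d = \<i> \<or> v d = -\<i>" using v_cases_d assms by auto
    moreover have "norm (1 - \<i>) = sqrt 2" by (simp add: cmod_def)
    moreover have "norm (1 + \<i>) = sqrt 2" by (simp add: cmod_def)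
    moreover have "(1::real) \<le> sqrt 2" by simp
    ultimately show ?thesis by auto
  qed
  moreover have "norm (1 - v d) - norm (v d - zp eps \<theta> d) \<le> norm (1 - zp eps \<theta> d)"
    using norm_triangle_ineq2[of "1 - v d" "zp eps \<theta> d - v d"] by (simp add: norm_minus_commute)
  moreover have "norm (v d - zp eps \<theta> d) \<le> 1/2" using norm_v_d_minus_zp_d_le e1 delta_le by linarith
  ultimately show ?thesis by linarith
qed

lemma norm_one_plus_zp_d_le: "norm (1 + zp eps \<theta> d) \<le> 2"
proof -
  have "norm (1 + zp eps \<theta> d) \<le> norm (1::complex) + norm (zp eps \<theta> d)" by (rule norm_triangle_ineq)
  then show ?thesis using norm_zp_d[of eps \<theta>] e0 e1 by simp
qed

lemma norm_numerator_le: "norm (polyB d S wt (zp eps \<theta>) - (zp eps \<theta> d)^2 * polyA d S wt (zp eps \<theta>)) \<le> 2 * B1"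
proof -
  have "norm (polyB d S wt (zp eps \<theta>) - (zp eps \<theta> d)^2 * polyA d S wt (zp eps \<theta>))
      \<le> norm (polyB d S wt (zp eps \<theta>)) + norm ((zp eps \<theta> d)^2 * polyA d S wt (zp eps \<theta>))"
    by (rule norm_triangle_ineq4)
  also have "norm ((zp eps \<theta> d)^2 * polyA d S wt (zp eps \<theta>)) \<le> 1 * A1"
  proof -
    have n2: "norm ((zp eps \<theta> d)^2) \<le> 1" using norm_zp_d[of eps \<theta>] e0 e1 by (simp add: norm_power power_le_one)
    have "norm ((zp eps \<theta> d)^2 * polyA d S wt (zp eps \<theta>)) = norm ((zp eps \<theta> d)^2) * norm (polyA d S wt (zp eps \<theta>))"
      by (rule norm_mult)
    also have "\<dots> \<le> 1 * A1" by (rule mult_mono[OF n2 norm_polyA_zp]) auto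
    finally show ?thesis .
  qed
  finally show ?thesis using norm_polyB_zp[of eps \<theta>] A1_eq_B1 by simp
qed

text \<open>Where \<open>polyA\<close> and \<open>polyB\<close> agree at \<open>v\<close>, the numerator vanishes at \<open>z\<^sub>d = 1\<close> up to an error \<open>O(\<delta>)\<close>,
  which tames the pole of \<open>1 / (1 - z\<^sub>d)\<close>.\<close>
lemma norm_numerator_le_balanced:
  assumes "polyA d S wt v = polyB d S wt v"
  shows "norm (polyB d S wt (zp eps \<theta>) - (zp eps \<theta> d)^2 * polyA d S wt (zp eps \<theta>))
     \<le> 2 * B1 * (real d * \<delta>) + A1 * (norm (1 - zp eps \<theta> d) * norm (1 + zp eps \<theta> d))"
proof -
  let ?Bz = "polyB d S wt (zp eps \<theta>)" and ?Az = "polyA d S wt (zp eps \<theta>)" and ?z = "zp eps \<theta> d"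
  have eq: "?Bz - ?z^2 * ?Az = (?Bz - polyB d S wt v) + (polyA d S wt v - ?Az) + ((1 - ?z) * (1 + ?z)) * ?Az"
    using assms by (simp add: algebra_simps power2_eq_square)
  have "norm (?Bz - ?z^2 * ?Az) \<le> norm (?Bz - polyB d S wt v) + norm (polyA d S wt v - ?Az) + norm (((1 - ?z) * (1 + ?z)) * ?Az)"
    unfolding eq by (intro order_trans[OF norm_triangle_ineq] add_mono) (auto intro: norm_triangle_ineq)
  also have "\<dots> \<le> B1 * (real d * \<delta>) + A1 * (real d * \<delta>) + (norm (1 - ?z) * norm (1 + ?z)) * A1"
    using norm_polyB_zp_diff_le[OF box d0, of eps] norm_polyA_zp_diff_le[OF box d0, of eps] norm_polyA_zp[of eps \<theta>]
    by (intro add_mono) (auto simp: norm_mult norm_minus_commute intro: mult_left_mono)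
  finally show ?thesis using A1_eq_B1 by (simp add: algebra_simps)
qed

lemma norm_prefactor_le_factors:
  "norm (prefactor eps \<theta>) \<le> norm (\<Prod>j\<in>{1..<d}. 1 + zp eps \<theta> j) * (4 / B1)
     * (norm (polyB d S wt (zp eps \<theta>) - (zp eps \<theta> d)^2 * polyA d S wt (zp eps \<theta>)) / norm (1 - zp eps \<theta> d))"
proof -
  let ?F = "norm (\<Prod>j\<in>{1..<d}. 1 + zp eps \<theta> j)"
  let ?G = "norm (polyB d S wt (zp eps \<theta>) * (\<Prod>j\<in>{1..d}. zp eps \<theta> j))"
  let ?R = "norm (polyB d S wt (zp eps \<theta>) - (zp eps \<theta> d)^2 * polyA d S wt (zp eps \<theta>)) / norm (1 - zp eps \<theta> d)"
  have G: "?G \<ge> B1 / 4" by (rule norm_denominator_ge)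
  have B4: "B1 / 4 > 0" using B1_pos by simp
  have Gp: "?G > 0" using G B4 by linarith
  have "?F / ?G \<le> ?F / (B1 / 4)"
    by (rule divide_left_mono) (use G B4 mult_pos_pos[OF Gp B4] in auto)
  then have "?F / ?G * ?R \<le> ?F * (4 / B1) * ?R"
    by (intro mult_right_mono) auto
  then show ?thesis by (simp add: prefactor_def norm_mult norm_divide)
qed

lemma norm_numerator_div_le:
  "norm (polyB d S wt (zp eps \<theta>) - (zp eps \<theta> d)^2 * polyA d S wt (zp eps \<theta>)) / norm (1 - zp eps \<theta> d)
     \<le> 2 * B1 * (real d * \<delta> / eps + 2)"
proof -
  let ?N = "norm (polyB d S wt (zp eps \<theta>) - (zp eps \<theta> d)^2 * polyA d S wt (zp eps \<theta>))"
  let ?D = "norm (1 - zp eps \<theta> d)"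
  let ?E = "norm (1 + zp eps \<theta> d)"
  have D: "?D \<ge> eps" by (rule norm_one_minus_zp_d_ge_eps)
  then have Dpos: "?D > 0" using e0 by linarith
  have rd: "0 \<le> real d * \<delta>" using d0 by simp
  show ?thesis
  proof (cases "v d = 1")
    case True
    have N: "?N \<le> 2 * B1 * (real d * \<delta>) + A1 * (?D * ?E)"
      by (rule norm_numerator_le_balanced[OF polyA_v_eq_polyB_v]) (use True in auto)
    have "?N / ?D \<le> (2 * B1 * (real d * \<delta>) + A1 * (?D * ?E)) / ?D"
      by (rule divide_right_mono[OF N]) simp
    also have "\<dots> = 2 * B1 * (real d * \<delta>) / ?D + A1 * ?E" using Dpos by (simp add: field_simps)
    also have "2 * B1 * (real d * \<delta>) / ?D \<le> 2 * B1 * (real d * \<delta>) / eps"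
      by (rule divide_left_mono) (use D e0 B1_pos rd mult_pos_pos[OF Dpos e0] in auto)
    also have "A1 * ?E \<le> A1 * 2" using norm_one_plus_zp_d_le A1_pos by (intro mult_left_mono) auto
    finally show ?thesis using A1_eq_B1 B1_pos by (simp add: field_simps)
  next
    case False
    have "?N / ?D \<le> 2 * B1 / (1/2)"
      by (rule frac_le) (use norm_numerator_le norm_one_minus_zp_d_ge_half[OF False] B1_pos in auto)
    also have "\<dots> \<le> 2 * B1 * (real d * \<delta> / eps + 2)"
    proof -
      have "0 \<le> 2 * B1 * (real d * \<delta> / eps)" using B1_pos rd e0 by simp
      then show ?thesis by (simp add: algebra_simps)
    qed
    finally show ?thesis .
  qed
qed

text \<open>When \<open>w = (1, \<dots>, 1, -1)\<close> the factor \<open>1 + z\<^sub>d\<close> hidden in the numerator is small.\<close>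
lemma norm_numerator_div_le_last:
  assumes vd: "v d = -1"
  shows "norm (polyB d S wt (zp eps \<theta>) - (zp eps \<theta> d)^2 * polyA d S wt (zp eps \<theta>)) / norm (1 - zp eps \<theta> d)
     \<le> B1 * (4 * (real d * \<delta>) + (\<delta> + eps))"
proof -
  let ?N = "norm (polyB d S wt (zp eps \<theta>) - (zp eps \<theta> d)^2 * polyA d S wt (zp eps \<theta>))"
  let ?D = "norm (1 - zp eps \<theta> d)"
  let ?E = "norm (1 + zp eps \<theta> d)"
  have D: "?D \<ge> 1/2" by (rule norm_one_minus_zp_d_ge_half) (use vd in auto)
  then have Dpos: "?D > 0" by linarith
  have rd: "0 \<le> real d * \<delta>" using d0 by simp
  have "1 + zp eps \<theta> d = - (v d - zp eps \<theta> d)" using vd by simp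
  then have E: "?E \<le> \<delta> + eps" using norm_v_d_minus_zp_d_le by (simp only: norm_minus_cancel)
  have N: "?N \<le> 2 * B1 * (real d * \<delta>) + A1 * (?D * ?E)"
    by (rule norm_numerator_le_balanced[OF polyA_v_eq_polyB_v]) (use vd in auto)
  have "?N / ?D \<le> (2 * B1 * (real d * \<delta>) + A1 * (?D * ?E)) / ?D"
    by (rule divide_right_mono[OF N]) simp
  also have "\<dots> = 2 * B1 * (real d * \<delta>) / ?D + A1 * ?E" using Dpos by (simp add: field_simps)
  also have "2 * B1 * (real d * \<delta>) / ?D \<le> 2 * B1 * (real d * \<delta>) / (1/2)"
    by (rule divide_left_mono) (use D B1_pos rd mult_pos_pos[OF Dpos, of "1/2"] in auto)
  also have "A1 * ?E \<le> A1 * (\<delta> + eps)" using E A1_pos by (intro mult_left_mono) auto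
  finally show ?thesis using A1_eq_B1 by (simp add: algebra_simps)
qed

lemma norm_prefactor_le_if_hat_flipped:
  assumes j0: "j0 \<in> {1..<d}" "v j0 \<noteq> 1"
  shows "norm (prefactor eps \<theta>) \<le> prefactor_const * (\<delta> + eps + \<delta>\<^sup>2 / eps)"
proof -
  have "norm (prefactor eps \<theta>) \<le> norm (\<Prod>j\<in>{1..<d}. 1 + zp eps \<theta> j) * (4 / B1)
     * (norm (polyB d S wt (zp eps \<theta>) - (zp eps \<theta> d)^2 * polyA d S wt (zp eps \<theta>)) / norm (1 - zp eps \<theta> d))"
    by (rule norm_prefactor_le_factors)
  also have "\<dots> \<le> (2 ^ d * \<delta>) * (4 / B1) * (2 * B1 * (real d * \<delta> / eps + 2))"
    using norm_prod_one_plus_le_delta[OF j0] norm_numerator_div_le B1_pos d0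
    by (intro mult_mono) auto
  also have "\<dots> = 2 ^ d * 8 * (real d * (\<delta>\<^sup>2 / eps) + 2 * \<delta>)"
    using B1_pos by (simp add: field_simps power2_eq_square)
  also have "\<dots> \<le> 2 ^ d * 16 * ((real d + 2) * (\<delta> + eps + \<delta>\<^sup>2 / eps))"
    using e0 d0 by (intro mult_mono) (auto simp: algebra_simps add_divide_distrib)
  also have "\<dots> = prefactor_const * (\<delta> + eps + \<delta>\<^sup>2 / eps)" by (simp add: prefactor_const_def)
  finally show ?thesis .
qed

lemma norm_prefactor_le_if_last_flipped:
  assumes vd: "v d = -1"
  shows "norm (prefactor eps \<theta>) \<le> prefactor_const * (\<delta> + eps + \<delta>\<^sup>2 / eps)"
proof -
  have "norm (prefactor eps \<theta>) \<le> norm (\<Prod>j\<in>{1..<d}. 1 + zp eps \<theta> j) * (4 / B1)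
     * (norm (polyB d S wt (zp eps \<theta>) - (zp eps \<theta> d)^2 * polyA d S wt (zp eps \<theta>)) / norm (1 - zp eps \<theta> d))"
    by (rule norm_prefactor_le_factors)
  also have "\<dots> \<le> 2 ^ d * (4 / B1) * (B1 * (4 * (real d * \<delta>) + (\<delta> + eps)))"
    using norm_prod_one_plus_le norm_numerator_div_le_last[OF vd] B1_pos d0
    by (intro mult_mono) auto
  also have "\<dots> = 2 ^ d * 4 * (4 * (real d * \<delta>) + (\<delta> + eps))"
    using B1_pos by (simp add: field_simps)
  also have "\<dots> \<le> 2 ^ d * 16 * ((real d + 2) * (\<delta> + eps + \<delta>\<^sup>2 / eps))"
  proof -
    have "(real d + 2) * (\<delta> + eps + \<delta>\<^sup>2 / eps)
        = real d * \<delta> + 2 * \<delta> + real d * eps + 2 * eps + (real d + 2) * (\<delta>\<^sup>2 / eps)"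
      by (simp add: algebra_simps add_divide_distrib)
    moreover have "0 \<le> (real d + 2) * (\<delta>\<^sup>2 / eps)" "0 \<le> real d * eps" "0 \<le> real d * \<delta>"
      using e0 d0 by simp_all
    ultimately show ?thesis using e0 d0 by simp
  qed
  also have "\<dots> = prefactor_const * (\<delta> + eps + \<delta>\<^sup>2 / eps)" by (simp add: prefactor_const_def)
  finally show ?thesis .
qed

lemma norm_prefactor_le: "norm (prefactor eps \<theta>) \<le> prefactor_const * (\<delta> + eps + \<delta>\<^sup>2 / eps)"
proof (cases "\<exists>j0\<in>{1..<d}. v j0 \<noteq> 1")
  case True
  then show ?thesis using norm_prefactor_le_if_hat_flipped by blast
next
  case False
  then show ?thesis using norm_prefactor_le_if_last_flipped v_d_eq_minus_one by blast
qed

end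

lemma norm_Nintegrand_le:
  assumes e0: "0 < eps" and e1: "eps \<le> 1/4" and d0: "0 \<le> \<delta>" and dl: "real d * \<delta> \<le> 1/4"
    and th: "\<theta> \<in> Nbox d \<delta> v"
  shows "norm (integrand d S wt n (zpt d eps \<theta>) * (\<Prod>j\<in>{1..d}. \<i> * zpt d eps \<theta> j))
    \<le> (prefactor_const * (\<delta> + eps + \<delta>\<^sup>2 / eps) * W ^ n * exp (real n * (2 * eps\<^sup>2)))
       * (\<Prod>j\<in>{1..d}. exp (- ((real n * gauss_rate) * (\<theta> j - \<theta>v j)\<^sup>2)))"
proof -
  have box: "\<forall>j\<in>{1..d}. \<bar>offset \<theta> j\<bar> \<le> \<delta>"
    using th by (auto simp: Nbox_def offset_def \<theta>v_def less_imp_le)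
  have dl1: "real d * \<delta> \<le> 1" using dl by simp
  define X where "X = \<delta> + eps + \<delta>\<^sup>2 / eps"
  define Sb where "Sb = norm (charpoly_bar d S wt (zp eps \<theta>))"
  have X0: "0 \<le> X" unfolding X_def using e0 d0 by simp
  have P: "norm (prefactor eps \<theta>) \<le> prefactor_const * X" unfolding X_def by (rule norm_prefactor_le[OF e0 e1 d0 dl box])
  have Sp: "Sb ^ n \<le> W ^ n * (exp (real n * (2 * eps\<^sup>2)) * exp (- (real n * (gauss_rate * (\<Sum>j\<in>{1..d}. (offset \<theta> j)\<^sup>2)))))"
    unfolding Sb_def by (rule norm_charpoly_bar_power_le) (use e0 e1 box dl1 d0 in auto)
  have I1: "norm (\<Prod>j\<in>{1..d}. \<i> * zpt d eps \<theta> j) \<le> 1" by (rule norm_prod_izp) (use e0 e1 in auto)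
  have ex: "exp (- (real n * (gauss_rate * (\<Sum>j\<in>{1..d}. (offset \<theta> j)\<^sup>2)))) = (\<Prod>j\<in>{1..d}. exp (- ((real n * gauss_rate) * (\<theta> j - \<theta>v j)\<^sup>2)))"
  proof -
    have "- (real n * (gauss_rate * (\<Sum>j\<in>{1..d}. (offset \<theta> j)\<^sup>2))) = (\<Sum>j\<in>{1..d}. - ((real n * gauss_rate) * (\<theta> j - \<theta>v j)\<^sup>2))"
      by (simp add: sum_distrib_left sum_negf offset_def mult.assoc)
    then show ?thesis by (simp add: exp_sum)
  qed
  have "norm (integrand d S wt n (zpt d eps \<theta>) * (\<Prod>j\<in>{1..d}. \<i> * zpt d eps \<theta> j))
      = norm (prefactor eps \<theta>) * Sb ^ n * norm (\<Prod>j\<in>{1..d}. \<i> * zpt d eps \<theta> j)"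
    by (simp add: integrand_eq_prefactor norm_mult norm_power Sb_def)
  also have "\<dots> \<le> (prefactor_const * X) * (W ^ n * (exp (real n * (2 * eps\<^sup>2)) * exp (- (real n * (gauss_rate * (\<Sum>j\<in>{1..d}. (offset \<theta> j)\<^sup>2)))))) * 1"
    using P Sp I1 X0 prefactor_const_pos W_pos by (intro mult_mono) (auto simp: Sb_def)
  also have "\<dots> = (prefactor_const * X * W ^ n * exp (real n * (2 * eps\<^sup>2))) * (\<Prod>j\<in>{1..d}. exp (- ((real n * gauss_rate) * (\<theta> j - \<theta>v j)\<^sup>2)))"
    unfolding ex by (simp add: mult_ac)
  finally show ?thesis unfolding X_def .
qed

lemma norm_Nintegral_le:
  fixes \<alpha> \<beta> :: real and n :: nat
  assumes n: "n > 0" and e1: "real n powr (-\<alpha>) \<le> 1/4" and dl: "real d * real n powr (-\<beta>) \<le> 1/4"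
  shows "norm (Nintegral d S wt \<alpha> \<beta> v n)
    \<le> (prefactor_const * prefactor_scale \<alpha> \<beta> n * W ^ n
        * exp (real n * (2 * (real n powr (-\<alpha>))\<^sup>2))) * sqrt (pi / (real n * gauss_rate)) ^ d"
proof -
  define eps where "eps = real n powr (-\<alpha>)"
  define \<delta> where "\<delta> = real n powr (-\<beta>)"
  have e0: "0 < eps" using n by (simp add: eps_def)
  have d0: "0 \<le> \<delta>" by (simp add: \<delta>_def)
  have N: "Nintegral d S wt \<alpha> \<beta> v n = set_lebesgue_integral (PiM {1..d} (\<lambda>_. lborel)) (Nbox d \<delta> v)
      (\<lambda>\<theta>. integrand d S wt n (zpt d eps \<theta>) * (\<Prod>j\<in>{1..d}. \<i> * zpt d eps \<theta> j))"
    unfolding Nintegral_def Let_def eps_def \<delta>_def ..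
  have k: "real n * gauss_rate > 0" using n gauss_rate_pos by simp
  have K: "0 \<le> prefactor_const * (\<delta> + eps + \<delta>\<^sup>2 / eps) * W ^ n * exp (real n * (2 * eps\<^sup>2))"
    using prefactor_const_pos e0 d0 W_pos by simp
  have "norm (set_lebesgue_integral (PiM {1..d} (\<lambda>_. lborel)) (Nbox d \<delta> v)
      (\<lambda>\<theta>. integrand d S wt n (zpt d eps \<theta>) * (\<Prod>j\<in>{1..d}. \<i> * zpt d eps \<theta> j)))
      \<le> (prefactor_const * (\<delta> + eps + \<delta>\<^sup>2 / eps) * W ^ n * exp (real n * (2 * eps\<^sup>2))) * sqrt (pi / (real n * gauss_rate)) ^ card {1..d}"
    by (rule norm_set_integral_le_gaussian[OF k K _ finite_atLeastAtMost])
       (rule norm_Nintegrand_le[OF e0 _ d0], use e1 dl in \<open>auto simp: eps_def \<delta>_def\<close>)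
  then show ?thesis unfolding N eps_def \<delta>_def prefactor_scale_def by simp
qed

lemma norm_Nintegral_eventually_le:
  assumes a: "1/2 < \<alpha>" and b: "0 < \<beta>"
  shows "eventually (\<lambda>n. norm (Nintegral d S wt \<alpha> \<beta> v n)
     \<le> prefactor_const * exp 2 * sqrt (pi / gauss_rate) ^ d * prefactor_scale \<alpha> \<beta> n
        * (W ^ n * real n powr (- (real d / 2)))) sequentially"
proof -
  have r: "filterlim (\<lambda>n. real n) at_top sequentially" by (rule filterlim_real_sequentially)
  have "(\<lambda>n. real n powr (-\<alpha>)) \<longlonglongrightarrow> 0" by (rule tendsto_neg_powr[OF _ r]) (use a in simp)
  then have ev_eps: "eventually (\<lambda>n. real n powr (-\<alpha>) < 1/4) sequentially"
    by (rule order_tendstoD(2)) simp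
  have "(\<lambda>n. real d * real n powr (-\<beta>)) \<longlonglongrightarrow> real d * 0"
    by (intro tendsto_mult tendsto_const tendsto_neg_powr[OF _ r]) (use b in simp)
  then have ev_delta: "eventually (\<lambda>n. real d * real n powr (-\<beta>) < 1/4) sequentially"
    by (rule order_tendstoD(2)) simp
  show ?thesis using ev_eps ev_delta eventually_ge_at_top[of 1]
  proof eventually_elim
    case (elim n)
    then have n0: "n > 0" by simp
    have "norm (Nintegral d S wt \<alpha> \<beta> v n) \<le> (prefactor_const * prefactor_scale \<alpha> \<beta> n * W ^ n
        * exp (real n * (2 * (real n powr (-\<alpha>))\<^sup>2))) * sqrt (pi / (real n * gauss_rate)) ^ d"
      using elim by (intro norm_Nintegral_le[OF n0]) auto
    also have "\<dots> \<le> (prefactor_const * prefactor_scale \<alpha> \<beta> n * W ^ n * exp 2)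
        * sqrt (pi / (real n * gauss_rate)) ^ d"
      using real_mult_powr_square_le[OF elim(3) a] prefactor_const_pos prefactor_scale_nonneg W_pos gauss_rate_pos
      by (intro mult_right_mono mult_left_mono) auto
    also have "sqrt (pi / (real n * gauss_rate)) ^ d = sqrt (pi / gauss_rate) ^ d * real n powr (- (real d / 2))"
      by (rule sqrt_divide_power_eq[OF n0]) (use gauss_rate_pos in auto)
    finally show ?case by (simp add: mult_ac)
  qed
qed

end

theorem mainTheorem9:
  fixes d :: nat and S :: "(nat \<Rightarrow> int) set" and wt :: "(nat \<Rightarrow> int) \<Rightarrow> real"
    and \<alpha> \<beta> :: real and v :: "nat \<Rightarrow> complex"
  assumes "d \<ge> 1"
    and "valid_stepset d S"
    and "\<forall>i\<in>S. wt i > 0"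
    and "symmetric_first d S wt"
    and "all_directions d S"
    and "polyA d S wt (\<lambda>_. 1) = polyB d S wt (\<lambda>_. 1)"
    and "1/2 < \<alpha>" and "\<alpha> < 2 * \<beta>" and "\<alpha> + \<beta> > 1" and "1/3 < \<beta>" and "\<beta> < 1/2"
    and "v \<in> Gamma d S wt"
    and "\<exists>j\<in>{1..d}. v j \<noteq> 1"
  shows "(\<lambda>n. cmod (Nintegral d S wt \<alpha> \<beta> v n))
           \<in> o(\<lambda>n. Re (charpoly d S wt (\<lambda>_. 1)) ^ n * real n powr (- (real d / 2)))"
proof -
  interpret walk d S wt v using assms by unfold_locales auto
  have "(\<lambda>n. cmod (Nintegral d S wt \<alpha> \<beta> v n)) \<in> o(\<lambda>n. W ^ n * real n powr (- (real d / 2)))"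
  proof (rule smallo_of_eventually_le_vanishing)
    show "eventually (\<lambda>n. \<bar>cmod (Nintegral d S wt \<alpha> \<beta> v n)\<bar>
        \<le> prefactor_const * exp 2 * sqrt (pi / gauss_rate) ^ d * prefactor_scale \<alpha> \<beta> n
           * (W ^ n * real n powr (- (real d / 2)))) sequentially"
      using norm_Nintegral_eventually_le[of \<alpha> \<beta>] assms by simp
    show "prefactor_scale \<alpha> \<beta> \<longlonglongrightarrow> 0"
      by (rule prefactor_scale_tendsto_zero) (use assms in auto)
    show "0 < prefactor_const * exp 2 * sqrt (pi / gauss_rate) ^ d"
      using prefactor_const_pos gauss_rate_pos by simp
    show "0 \<le> W ^ n * real n powr (- (real d / 2))" for n
      using W_pos by simp
  qed
  then show ?thesis by (simp add: charpoly_one)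
qed

end
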